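(* Let $n>(p+s)^4$ be an integer. For any $j \in \{1,2,\ldots,p-1\}$, \[ S_{j/p} = \rho_{0,j/p} + \sum_{i=2}^{p-1+s} \rho_i \cdot \omega\left(\frac{j}{p}\right)^{1-i}\zeta_p\left(i,\frac{j}{p}\right), \] where $\rho_i:=\sum_{k=1}^n r_{i,k}$ for $2\leqslant i\leqslant p-1+s$ (independent of $j$) and \[\rho_{0,j/p}:=-\sum_{i=1}^{p-1+s}\sum_{k=1}^n\sum_{\nu=0}^{k-1} \frac{r_{i,k}}{\left(\nu+\frac{j}{p}\right)^{i}}.\]
   Context: Let $p\geqslant 5$ be a prime and $s$ a positive integer. Write $v_p$ for the $p$-adic valuation and $(\alpha)_k=\alpha(\alpha+1)\cdots(\alpha+k-1)$. Put $N_0=v_p(p-1+s)$ and $M_0=p^{2+N_0}s-1$. For an integer $n>(p+s)^4$ let \[R_n(t)=p^{pn}\, n!^s\, t^{M_0}\,\frac{\prod_{j=1}^{p-1}(t+\frac{j}{p})_n}{(t)_{n+1}^{p-1+s}}\in\mathbb{Q}(t),\] with partial fraction decomposition $R_n(t)=\sum_{i=1}^{p-1+s}\sum_{k=1}^{n} r_{i,k}(t+k)^{-i}$, $r_{i,k}\in\mathbb{Q}$. Let $\omega$ be the Teichmüller character on $\mathbb{Z}_p^\times$ (projection in $\mathbb{Z}_p^\times\cong\mu_{p-1}(\mathbb{Z}_p)\times(1+p\mathbb{Z}_p)$), extended to $\mathbb{Q}_p^\times$ by $\omega(x)=p^{v_p(x)}\omega(x/p^{v_p(x)})$, and $\langle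 x\rangle=x/\omega(x)$; $\log_p$ is the $p$-adic logarithm $\log_p(1+x)=\sum_{m\geqslant1}(-1)^{m-1}x^m/m$, $|x|_p<1$. Define \[\widetilde{R}_n(t) = \sum_{k=1}^{n} r_{1,k}\log_p\langle t + k\rangle + \sum_{i=2}^{p-1+s}\sum_{k=1}^{n} \frac{r_{i,k}}{(1-i)(t+k)^{i-1}}.\] The Volkenborn integral of $f:\mathbb{Z}_p\to\mathbb{Q}_p$ is $\int_{\mathbb{Z}_p}f(t)\,\mathrm{d}t=\lim_{m\to\infty}p^{-m}\sum_{0\leqslant k<p^m}f(k)$ when the limit exists. Set $S_{j/p}:=-\int_{\mathbb{Z}_p}\widetilde{R}_n(t+\frac{j}{p})\,\mathrm{d}t$. For $x\in\mathbb{Q}_p$ with $|x|_p>1$ and an integer $i\geqslant2$, the $p$-adic Hurwitz zeta value is $\zeta_p(i,x)=\frac{1}{i-1}\int_{\mathbb{Z}_p}\langle t+x\rangle^{1-i}\,\mathrm{d}t$. *)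

theory Defs
  imports Complex_Main "HOL-Computational_Algebra.Primes"
begin

definition pval :: "nat \<Rightarrow> rat \<Rightarrow> int" where
  "pval p x = (case quotient_of x of (a, b) \<Rightarrow>
      int (multiplicity (int p) a) - int (multiplicity (int p) b))"

definition pabs :: "nat \<Rightarrow> rat \<Rightarrow> real" where
  "pabs p x = (if x = 0 then 0 else real p powr (- real_of_int (pval p x)))"

text \<open>Elements of Q_p are represented by p-adically Cauchy sequences of rationals.\<close>
type_synonym padic = "nat \<Rightarrow> rat"

definition padic_cauchy :: "nat \<Rightarrow> padic \<Rightarrow> bool" where
  "padic_cauchy p X \<longleftrightarrow> (\<forall>e>0. \<exists>M. \<forall>m\<ge>M. \<forall>k\<ge>M. pabs p (X m - X k) < e)"

definition padic_norm :: "nat \<Rightarrow> padic \<Rightarrow> real" where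
  "padic_norm p X = lim (\<lambda>N. pabs p (X N))"

definition padic_eq :: "nat \<Rightarrow> padic \<Rightarrow> padic \<Rightarrow> bool" where
  "padic_eq p X Y \<longleftrightarrow> padic_cauchy p X \<and> padic_cauchy p Y \<and>
      (\<lambda>N. pabs p (X N - Y N)) \<longlonglongrightarrow> 0"

definition padic_lim :: "nat \<Rightarrow> (nat \<Rightarrow> padic) \<Rightarrow> padic \<Rightarrow> bool" where
  "padic_lim p F L \<longleftrightarrow> padic_cauchy p L \<and> (\<forall>m. padic_cauchy p (F m)) \<and>
      (\<lambda>m. padic_norm p (\<lambda>N. F m N - L N)) \<longlonglongrightarrow> 0"

definition punit :: "nat \<Rightarrow> rat \<Rightarrow> rat" where
  "punit p x = x * (of_nat p) powi (- pval p x)"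

text \<open>Teichmueller character omega(x) = p^(v_p x) omega(unit part); omega(u) = lim u^(p^N).\<close>
definition omega :: "nat \<Rightarrow> rat \<Rightarrow> padic" where
  "omega p x = (\<lambda>N. (of_nat p) powi (pval p x) * (punit p x) ^ (p ^ N))"

definition pangle :: "nat \<Rightarrow> rat \<Rightarrow> padic" where
  "pangle p x = (\<lambda>N. x / omega p x N)"

definition plog :: "nat \<Rightarrow> padic \<Rightarrow> padic" where
  "plog p Y = (\<lambda>N. \<Sum>m=1..N. (-1) ^ (m - 1) * (Y N - 1) ^ m / of_nat m)"

definition volkenborn :: "nat \<Rightarrow> (nat \<Rightarrow> padic) \<Rightarrow> padic \<Rightarrow> bool" where
  "volkenborn p f I \<longleftrightarrow>
     padic_lim p (\<lambda>m N. (\<Sum>k<p ^ m. f k N) / of_nat p ^ m) I"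

definition padic_hurwitz_zeta :: "nat \<Rightarrow> nat \<Rightarrow> rat \<Rightarrow> padic \<Rightarrow> bool" where
  "padic_hurwitz_zeta p i x Z \<longleftrightarrow>
     (\<exists>I. volkenborn p (\<lambda>k N. (pangle p (of_nat k + x) N) powi (1 - int i)) I \<and>
          padic_eq p Z (\<lambda>N. I N / (of_nat i - 1)))"

definition N0 :: "nat \<Rightarrow> nat \<Rightarrow> nat" where
  "N0 p s = multiplicity p (p - 1 + s)"

definition M0 :: "nat \<Rightarrow> nat \<Rightarrow> nat" where
  "M0 p s = p ^ (2 + N0 p s) * s - 1"

definition Rn :: "nat \<Rightarrow> nat \<Rightarrow> nat \<Rightarrow> rat \<Rightarrow> rat" where
  "Rn p s n t = (of_nat p) ^ (p * n) * (fact n) ^ s * t ^ M0 p s *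
     (\<Prod>j=1..p-1. pochhammer (t + of_nat j / of_nat p) n) /
     (pochhammer t (n + 1)) ^ (p - 1 + s)"

definition Rtilde :: "nat \<Rightarrow> nat \<Rightarrow> nat \<Rightarrow> (nat \<Rightarrow> nat \<Rightarrow> rat) \<Rightarrow> rat \<Rightarrow> padic" where
  "Rtilde p s n r t = (\<lambda>N.
     (\<Sum>k=1..n. r 1 k * plog p (pangle p (t + of_nat k)) N) +
     (\<Sum>i=2..p-1+s. \<Sum>k=1..n. r i k / ((1 - of_nat i) * (t + of_nat k) ^ (i - 1))))"

end

theory Submission
  imports Defs "HOL-Number_Theory.Residues"
begin

text \<open>
  The Volkenborn integral is the \<open>p\<close>-adic limit of the Riemann sums \<open>p\<^sup>-\<^sup>m \<Sum>k<p\<^sup>m. f k\<close>,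
  and shifting the variable by an integer \<open>k\<close> changes it by \<open>\<Sum>\<nu><k. f'(\<nu>)\<close>. Every summand of
  \<open>R\<^sup>~\<^sub>n(t + j/p)\<close> is an antiderivative of \<open>r\<^sub>i\<^sub>,\<^sub>k (t + k + j/p)\<^sup>-\<^sup>i\<close>; undoing the shifts
  produces \<open>\<rho>\<^sub>0\<^sub>,\<^sub>j\<^sub>/\<^sub>p\<close>, and what remains is \<open>\<rho>\<^sub>i\<close> times the integral of the unshifted
  antiderivative. For \<open>i \<ge> 2\<close> that integral is \<open>\<omega>(j/p)\<^bsup>1-i\<^esup> \<zeta>\<^sub>p(i, j/p)\<close>, because
  \<open>\<langle>t + j/p\<rangle> = (p t + j) / \<omega>(j)\<close> on \<open>\<int>\<^sub>p\<close>. For \<open>i = 1\<close> the integral of \<open>log\<^sub>p \<langle>t + j/p\<rangle>\<close>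
  is multiplied by \<open>\<rho>\<^sub>1 = \<Sum>k. r\<^sub>1\<^sub>,\<^sub>k\<close>, which vanishes because \<open>t R\<^sub>n(t) \<rightarrow> 0\<close> as
  \<open>t \<rightarrow> \<infinity>\<close>; this is where \<open>n > (p + s)\<^sup>4\<close> is needed.

  All \<open>p\<close>-adic numbers are sequences of rationals: \<open>\<omega>(q)\<close> is approximated by \<open>q\<^bsup>p\<^sup>N\<^esup>\<close> and
  \<open>log\<^sub>p\<close> by its truncated series, and every estimate is a congruence modulo a power of \<open>p\<close>.
\<close>

section \<open>Divisibility by powers of \<open>p\<close> in \<open>\<rat>\<close>\<close>

text \<open>\<open>ppow_dvd p e q\<close> says that \<open>q \<in> p\<^sup>e \<int>\<^sub>(\<^sub>p\<^sub>)\<close>; unlike \<open>pval\<close>, it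
  regards \<open>0\<close> as divisible by every power of \<open>p\<close>.\<close>
definition ppow_dvd :: "nat \<Rightarrow> int \<Rightarrow> rat \<Rightarrow> bool" where
  "ppow_dvd p e q \<longleftrightarrow> (\<exists>a b. \<not> int p dvd b \<and> q = of_int a / of_int b * of_nat p powi e)"

context
  fixes p :: nat
  assumes p: "prime p"
begin

lemma of_nat_prime_nonzero: "(of_nat p :: 'a :: semiring_char_0) \<noteq> 0"
  using p by (simp add: prime_gt_0_nat)

lemma ppow_dvd_0 [simp]: "ppow_dvd p e 0"
  unfolding ppow_dvd_def by (rule exI[of _ 0], rule exI[of _ 1]) (use p in \<open>auto simp: prime_int_iff\<close>)

lemma ppow_dvd_mult: "ppow_dvd p e a \<Longrightarrow> ppow_dvd p f b \<Longrightarrow> ppow_dvd p (e + f) (a * b)"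
proof -
  assume "ppow_dvd p e a" "ppow_dvd p f b"
  then obtain a1 a2 b1 b2 where A: "\<not> int p dvd a2" "a = of_int a1 / of_int a2 * of_nat p powi e"
    and B: "\<not> int p dvd b2" "b = of_int b1 / of_int b2 * of_nat p powi f"
    unfolding ppow_dvd_def by blast
  have "\<not> int p dvd a2 * b2" using A B p
    by (metis prime_dvd_mult_iff prime_nat_int_transfer)
  moreover have "a * b = of_int (a1 * b1) / of_int (a2 * b2) * of_nat p powi (e + f)"
    using A B of_nat_prime_nonzero by (simp add: power_int_add)
  ultimately show ?thesis unfolding ppow_dvd_def by blast
qed

lemma ppow_dvd_add: "ppow_dvd p e a \<Longrightarrow> ppow_dvd p e b \<Longrightarrow> ppow_dvd p e (a + b)"
proof -
  assume "ppow_dvd p e a" "ppow_dvd p e b"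
  then obtain a1 a2 b1 b2 where A: "\<not> int p dvd a2" "a = of_int a1 / of_int a2 * of_nat p powi e"
    and B: "\<not> int p dvd b2" "b = of_int b1 / of_int b2 * of_nat p powi e"
    unfolding ppow_dvd_def by blast
  have "\<not> int p dvd a2 * b2" using A B p
    by (metis prime_dvd_mult_iff prime_nat_int_transfer)
  moreover have "a2 \<noteq> 0" "b2 \<noteq> 0" using A B by auto
  moreover have "a + b = of_int (a1 * b2 + b1 * a2) / of_int (a2 * b2) * of_nat p powi e"
    using calculation by (simp only: A(2) B(2)) (simp add: field_simps)
  ultimately show ?thesis unfolding ppow_dvd_def by blast
qed

lemma ppow_dvd_minus: "ppow_dvd p e a \<Longrightarrow> ppow_dvd p e (- a)"
  unfolding ppow_dvd_def by (metis minus_divide_left minus_mult_left of_int_minus)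

lemma ppow_dvd_diff: "ppow_dvd p e a \<Longrightarrow> ppow_dvd p e b \<Longrightarrow> ppow_dvd p e (a - b)"
  using ppow_dvd_add[of e a "- b"] ppow_dvd_minus by simp

lemma ppow_dvd_diff_commute: "ppow_dvd p e (a - b) \<Longrightarrow> ppow_dvd p e (b - a)"
  using ppow_dvd_minus by (metis minus_diff_eq)

lemma ppow_dvd_mono: "e' \<le> e \<Longrightarrow> ppow_dvd p e a \<Longrightarrow> ppow_dvd p e' a"
proof -
  assume le: "e' \<le> e" and "ppow_dvd p e a"
  then obtain a1 a2 where A: "\<not> int p dvd a2" "a = of_int a1 / of_int a2 * of_nat p powi e"
    unfolding ppow_dvd_def by blast
  have "(of_nat p :: rat) powi e = of_nat p powi (e - e') * of_nat p powi e'"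
    using of_nat_prime_nonzero by (simp add: power_int_add[symmetric])
  also have "(of_nat p :: rat) powi (e - e') = of_int (int p ^ nat (e - e'))"
    using le by (simp add: power_int_def)
  finally have "a = of_int (a1 * int p ^ nat (e - e')) / of_int a2 * of_nat p powi e'"
    using A by simp
  with A show ?thesis unfolding ppow_dvd_def by blast
qed

lemma ppow_dvd_of_int: "ppow_dvd p 0 (of_int z)"
  unfolding ppow_dvd_def by (rule exI[of _ z], rule exI[of _ 1]) (use p in \<open>auto simp: prime_int_iff\<close>)

lemma ppow_dvd_of_nat: "ppow_dvd p 0 (of_nat z)"
  using ppow_dvd_of_int[of "int z"] by simp

lemma ppow_dvd_sign: "ppow_dvd p 0 ((- 1) ^ n)"
  using ppow_dvd_of_int[of "(- 1) ^ n"] by simp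

lemma ppow_dvd_power_int: "ppow_dvd p e (of_nat p powi e)"
  unfolding ppow_dvd_def by (rule exI[of _ 1], rule exI[of _ 1]) (use p in \<open>auto simp: prime_int_iff\<close>)

lemma ppow_dvd_prime_power: "ppow_dvd p (int e) (of_nat p ^ e)"
  using ppow_dvd_power_int[of "int e"] by simp

lemma ppow_dvd_inverse_unit: "\<not> int p dvd z \<Longrightarrow> ppow_dvd p 0 (1 / of_int z)"
  unfolding ppow_dvd_def by (rule exI[of _ 1], rule exI[of _ z]) auto

lemma ppow_dvd_of_int_dvd: "int p ^ e dvd z \<Longrightarrow> ppow_dvd p (int e) (of_int z)"
proof -
  assume "int p ^ e dvd z"
  then obtain c where "z = int p ^ e * c" by (auto elim: dvdE)
  then have "of_int z = (of_int c :: rat) * of_nat p powi int e" by simp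
  then show ?thesis using ppow_dvd_mult[OF ppow_dvd_of_int[of c] ppow_dvd_power_int[of "int e"]] by simp
qed

lemma ppow_dvd_sum:
  "finite A \<Longrightarrow> (\<And>x. x \<in> A \<Longrightarrow> ppow_dvd p e (f x)) \<Longrightarrow> ppow_dvd p e (\<Sum>x\<in>A. f x)"
  by (induction A rule: finite_induct) (auto intro: ppow_dvd_add)

lemma ppow_dvd_power: "ppow_dvd p e a \<Longrightarrow> ppow_dvd p (int n * e) (a ^ n)"
proof (induction n)
  case 0 then show ?case using ppow_dvd_of_int[of 1] by simp
next
  case (Suc n)
  then show ?case using ppow_dvd_mult[of e a "int n * e" "a ^ n"] by (simp add: algebra_simps)
qed

lemma ppow_dvd_exists: "\<exists>e. ppow_dvd p e q"
proof -
  obtain a b where ab: "quotient_of q = (a, b)" by (cases "quotient_of q")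
  then have q: "q = of_int a / of_int b" and "b > 0"
    using quotient_of_div quotient_of_denom_pos by auto
  obtain b' where b': "b = int p ^ multiplicity (int p) b * b'" "\<not> int p dvd b'"
    using multiplicity_decompose'[of b "int p"] \<open>b > 0\<close> p
    by (metis less_irrefl not_prime_unit prime_nat_int_transfer)
  have "q = of_int a / of_int b' * of_nat p powi (- int (multiplicity (int p) b))"
    by (subst q, subst b'(1)) (use of_nat_prime_nonzero in \<open>simp add: power_int_minus field_simps\<close>)
  then show ?thesis using b' unfolding ppow_dvd_def by blast
qed

lemma ppow_dvd_uniform:
  assumes "finite A" shows "\<exists>e. \<forall>a\<in>A. ppow_dvd p e (f a)"
  using assms
proof (induction A rule: finite_induct)
  case (insert a A)
  then obtain e where e: "\<forall>b\<in>A. ppow_dvd p e (f b)" by blast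
  obtain e' where e': "ppow_dvd p e' (f a)" using ppow_dvd_exists by blast
  have "\<forall>b\<in>insert a A. ppow_dvd p (min e e') (f b)"
    using e e' ppow_dvd_mono by (metis insert_iff min.cobounded1 min.cobounded2)
  then show ?case by blast
qed simp

lemma ppow_dvd_divide_prime_power:
  "ppow_dvd p e a \<Longrightarrow> ppow_dvd p (e - int m) (a / of_nat p ^ m)"
  using ppow_dvd_mult[of e a "- int m" "1 / of_nat p ^ m"] ppow_dvd_power_int[of "- int m"]
  by (simp add: power_int_minus divide_inverse)

lemma ppow_dvd_inverse_of_nat:
  assumes "l \<ge> 1" shows "ppow_dvd p (- int (multiplicity p l)) (1 / of_nat l)"
proof -
  obtain l' where l': "l = p ^ multiplicity p l * l'" "\<not> p dvd l'"
    using multiplicity_decompose'[of l p] assms p by (metis not_one_le_zero not_prime_unit)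
  have "1 / (of_nat l :: rat) = of_int 1 / of_int (int l') * of_nat p powi (- int (multiplicity p l))"
    by (subst l'(1)) (use of_nat_prime_nonzero in \<open>simp add: power_int_minus field_simps\<close>)
  moreover have "\<not> int p dvd int l'" using l'(2) by simp
  ultimately show ?thesis unfolding ppow_dvd_def by blast
qed

lemma multiplicity_mult_int:
  "x \<noteq> 0 \<Longrightarrow> y \<noteq> 0 \<Longrightarrow>
    multiplicity (int p) (x * y) = multiplicity (int p) x + multiplicity (int p) y"
  using prime_elem_multiplicity_mult_distrib[of "int p" x y] p by simp

lemma pval_unit_times_power:
  assumes u: "\<not> int p dvd u" and w: "\<not> int p dvd w"
  shows "pval p (of_int u / of_int w * of_nat p powi v) = v"
proof -
  define q :: rat where "q = of_int u / of_int w * of_nat p powi v"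
  obtain a b where ab: "quotient_of q = (a, b)" by (cases "quotient_of q")
  then have qa: "q = of_int a / of_int b" and b0: "b > 0"
    using quotient_of_div quotient_of_denom_pos by auto
  have u0: "u \<noteq> 0" and w0: "w \<noteq> 0" using u w by auto
  have pv: "pval p q = int (multiplicity (int p) a) - int (multiplicity (int p) b)"
    unfolding pval_def ab by simp
  have "q \<noteq> 0" using u0 w0 of_nat_prime_nonzero unfolding q_def by simp
  then have a0: "a \<noteq> 0" using qa by auto
  have mu: "multiplicity (int p) u = 0" and mw: "multiplicity (int p) w = 0"
    using u w by (simp_all add: not_dvd_imp_multiplicity_0)
  have mp: "multiplicity (int p) (int p ^ k) = k" for k
    using p by (simp add: prime_imp_prime_elem)
  show ?thesis
  proof (cases "v \<ge> 0")
    case True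
    then have "q = of_int (u * int p ^ nat v) / of_int w" unfolding q_def by (simp add: power_int_def)
    then have "of_int (u * int p ^ nat v * b) = (of_int (a * w) :: rat)"
      using qa b0 w0 by (simp add: field_simps)
    then have "multiplicity (int p) (u * int p ^ nat v * b) = multiplicity (int p) (a * w)"
      by (simp only: of_int_eq_iff)
    then have "nat v + multiplicity (int p) b = multiplicity (int p) a"
      using u0 w0 a0 b0 p by (simp add: multiplicity_mult_int mu mw mp)
    then show ?thesis using pv True q_def by simp
  next
    case False
    then have "q = of_int u / of_int (w * int p ^ nat (- v))"
      unfolding q_def using of_nat_prime_nonzero by (simp add: power_int_def field_simps)
    then have "of_int (u * b) = (of_int (a * (w * int p ^ nat (- v))) :: rat)"
      using qa b0 w0 of_nat_prime_nonzero by (simp add: field_simps)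
    then have "multiplicity (int p) (u * b) = multiplicity (int p) (a * (w * int p ^ nat (- v)))"
      by (simp only: of_int_eq_iff)
    then have "multiplicity (int p) b = multiplicity (int p) a + nat (- v)"
      using u0 w0 a0 b0 p by (simp add: multiplicity_mult_int mu mw mp)
    then show ?thesis using pv False q_def by simp
  qed
qed

lemma unit_power_decomposition:
  fixes q :: rat
  assumes "q \<noteq> 0"
  obtains u w v where "\<not> int p dvd u" "\<not> int p dvd w" "q = of_int u / of_int w * of_nat p powi v"
proof -
  obtain e a b where A: "\<not> int p dvd b" "q = of_int a / of_int b * of_nat p powi e"
    using ppow_dvd_exists[of q] unfolding ppow_dvd_def by blast
  have "a \<noteq> 0" using A assms by auto
  then obtain a' where a': "a = int p ^ multiplicity (int p) a * a'" "\<not> int p dvd a'"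
    using multiplicity_decompose'[of a "int p"] p by (metis not_prime_unit prime_nat_int_transfer)
  have "q = of_int a' / of_int b * of_nat p powi (e + int (multiplicity (int p) a))"
    by (subst A(2), subst a'(1)) (use of_nat_prime_nonzero in \<open>simp add: power_int_add\<close>)
  then show ?thesis using A a' that by blast
qed

lemma ppow_dvd_imp_pabs_le:
  assumes "ppow_dvd p e q" shows "pabs p q \<le> real p powr (- real_of_int e)"
proof (cases "q = 0")
  case False
  obtain a b where A: "\<not> int p dvd b" "q = of_int a / of_int b * of_nat p powi e"
    using assms unfolding ppow_dvd_def by blast
  have "a \<noteq> 0" using A False by auto
  then obtain a' where a': "a = int p ^ multiplicity (int p) a * a'" "\<not> int p dvd a'"
    using multiplicity_decompose'[of a "int p"] p by (metis not_prime_unit prime_nat_int_transfer)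
  have "q = of_int a' / of_int b * of_nat p powi (e + int (multiplicity (int p) a))"
    by (subst A(2), subst a'(1)) (use of_nat_prime_nonzero in \<open>simp add: power_int_add\<close>)
  then have "pval p q \<ge> e" using pval_unit_times_power A(1) a'(2) by simp
  moreover have "real p > 1" using p prime_gt_1_nat by auto
  ultimately show ?thesis using False unfolding pabs_def by (simp add: powr_mono)
qed (simp add: pabs_def)

lemma pval_perturb:
  assumes u: "\<not> int p dvd u" and w: "\<not> int p dvd w" and q: "q = of_int u / of_int w * of_nat p powi v"
    and d: "ppow_dvd p (v + 1) (q' - q)"
  shows "pval p q' = v" "q' \<noteq> 0"
proof -
  obtain c1 c2 where C: "\<not> int p dvd c2" "q' - q = of_int c1 / of_int c2 * of_nat p powi (v + 1)"
    using d unfolding ppow_dvd_def by blast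
  have w0: "w \<noteq> 0" and c0: "c2 \<noteq> 0" using w C by auto
  have "q' = q + (q' - q)" by simp
  also have "\<dots> = of_int (u * c2 + int p * c1 * w) / of_int (w * c2) * of_nat p powi v"
    by (subst C(2), subst q) (use of_nat_prime_nonzero w0 c0 in \<open>simp add: power_int_add field_simps\<close>)
  finally have q': "q' = \<dots>" .
  have n1: "\<not> int p dvd u * c2 + int p * c1 * w"
  proof
    assume "int p dvd u * c2 + int p * c1 * w"
    then have "int p dvd u * c2" by (simp add: dvd_add_left_iff mult.assoc)
    then show False using u C(1) p by (simp add: prime_dvd_mult_iff)
  qed
  have n2: "\<not> int p dvd w * c2" using w C(1) p by (simp add: prime_dvd_mult_iff)
  show "pval p q' = v" using pval_unit_times_power[OF n1 n2] q' by simp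
  have "u * c2 + int p * c1 * w \<noteq> 0" using n1 by auto
  then show "q' \<noteq> 0" using q' of_nat_prime_nonzero w0 c0 by (simp del: of_int_add of_int_mult)
qed

end

section \<open>\<open>p\<close>-adic Cauchy sequences of rationals\<close>

lemma pabs_nonneg: "pabs p q \<ge> 0"
  unfolding pabs_def by simp

definition pcauchy :: "nat \<Rightarrow> padic \<Rightarrow> bool" where
  "pcauchy p X \<longleftrightarrow> (\<forall>E. \<exists>M. \<forall>m\<ge>M. \<forall>k\<ge>M. ppow_dvd p E (X m - X k))"

context
  fixes p :: nat
  assumes p: "prime p"
begin

lemma pcauchyI:
  assumes "\<And>E. \<exists>M. \<forall>N\<ge>M. \<forall>N'\<ge>N. ppow_dvd p E (X N' - X N)"
  shows "pcauchy p X"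
  unfolding pcauchy_def
proof
  fix E
  obtain M where M: "\<forall>N\<ge>M. \<forall>N'\<ge>N. ppow_dvd p E (X N' - X N)" using assms by blast
  have "ppow_dvd p E (X m - X k)" if "m \<ge> M" "k \<ge> M" for m k
  proof (cases "k \<le> m")
    case True then show ?thesis using M that by blast
  next
    case False then show ?thesis using M that ppow_dvd_diff_commute[OF p] by simp
  qed
  then show "\<exists>M. \<forall>m\<ge>M. \<forall>k\<ge>M. ppow_dvd p E (X m - X k)" by blast
qed

lemma pcauchy_rate:
  assumes "\<And>N N'. N \<le> N' \<Longrightarrow> ppow_dvd p (int N - c) (X N' - X N)"
  shows "pcauchy p X"
proof (rule pcauchyI)
  fix E
  have "ppow_dvd p E (X N' - X N)" if "N \<ge> nat (E + c)" "N' \<ge> N" for N N'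
  proof -
    have "E \<le> int N - c" using that(1) by linarith
    then show ?thesis using assms[OF that(2)] ppow_dvd_mono[OF p] by blast
  qed
  then show "\<exists>M. \<forall>N\<ge>M. \<forall>N'\<ge>N. ppow_dvd p E (X N' - X N)" by blast
qed

lemma ex_prime_powr_neg_less:
  assumes "(r :: real) > 0" shows "\<exists>E::int. real p powr (- real_of_int E) < r"
proof -
  have "real p > 1" using p prime_gt_1_nat by auto
  then have "1 / real p < 1" "1 / real p > 0" by auto
  then obtain n where "(1 / real p) ^ n < r" using real_arch_pow_inv assms by blast
  moreover have "(1 / real p) ^ n = real p powr (- real_of_int (int n))"
    using \<open>real p > 1\<close> by (simp add: powr_minus powr_realpow divide_inverse power_inverse)
  ultimately show ?thesis by metis
qed

lemma pcauchy_imp_padic_cauchy: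
  assumes "pcauchy p X" shows "padic_cauchy p X"
  unfolding padic_cauchy_def
proof (intro allI impI)
  fix r :: real assume "r > 0"
  then obtain E where E: "real p powr (- real_of_int E) < r" using ex_prime_powr_neg_less by blast
  obtain M where "\<forall>m\<ge>M. \<forall>k\<ge>M. ppow_dvd p E (X m - X k)" using assms unfolding pcauchy_def by blast
  then have "\<forall>m\<ge>M. \<forall>k\<ge>M. pabs p (X m - X k) < r"
    using ppow_dvd_imp_pabs_le[OF p] E by (meson le_less_trans)
  then show "\<exists>M. \<forall>m\<ge>M. \<forall>k\<ge>M. pabs p (X m - X k) < r" by blast
qed

text \<open>Either \<open>X\<close> tends to \<open>0\<close>, or its terms eventually have constant valuation.\<close>
lemma pcauchy_pabs_convergent:
  assumes X: "pcauchy p X" shows "convergent (\<lambda>N. pabs p (X N))"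
proof (cases "\<forall>E. \<exists>M. \<forall>N\<ge>M. ppow_dvd p E (X N)")
  case True
  have "(\<lambda>N. pabs p (X N)) \<longlonglongrightarrow> 0"
  proof (rule LIMSEQ_I)
    fix r :: real assume "r > 0"
    then obtain E where E: "real p powr (- real_of_int E) < r" using ex_prime_powr_neg_less by blast
    obtain M where "\<forall>N\<ge>M. ppow_dvd p E (X N)" using True by blast
    then have "\<forall>N\<ge>M. norm (pabs p (X N) - 0) < r"
      using ppow_dvd_imp_pabs_le[OF p] E pabs_nonneg by (simp add: abs_of_nonneg) (meson le_less_trans)
    then show "\<exists>M. \<forall>N\<ge>M. norm (pabs p (X N) - 0) < r" by blast
  qed
  then show ?thesis using convergent_def by blast
next
  case False
  then obtain E where nE: "\<forall>M. \<exists>N\<ge>M. \<not> ppow_dvd p E (X N)" by blast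
  obtain M where M: "\<forall>m\<ge>M. \<forall>k\<ge>M. ppow_dvd p E (X m - X k)" using X unfolding pcauchy_def by blast
  obtain N1 where N1: "N1 \<ge> M" "\<not> ppow_dvd p E (X N1)" using nE by blast
  then have "X N1 \<noteq> 0" using ppow_dvd_0[OF p] by auto
  then obtain u w v where R: "\<not> int p dvd u" "\<not> int p dvd w" "X N1 = of_int u / of_int w * of_nat p powi v"
    using unit_power_decomposition[OF p] by blast
  have "v < E"
  proof (rule ccontr)
    assume "\<not> v < E"
    moreover have "ppow_dvd p v (X N1)" using R unfolding ppow_dvd_def by blast
    ultimately show False using N1 ppow_dvd_mono[OF p] by (meson not_less)
  qed
  have "pabs p (X N) = real p powr (- real_of_int v)" if "N \<ge> M" for N
  proof -
    have "ppow_dvd p (v + 1) (X N - X N1)"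
      using M N1 that ppow_dvd_mono[OF p] \<open>v < E\<close> by (metis zless_imp_add1_zle)
    then show ?thesis using pval_perturb[OF p R] unfolding pabs_def by simp
  qed
  then have "(\<lambda>N. pabs p (X N)) \<longlonglongrightarrow> real p powr (- real_of_int v)"
    by (intro tendsto_eventually) (auto simp: eventually_at_top_linorder)
  then show ?thesis using convergent_def by blast
qed

lemma padic_norm_bounds:
  assumes "pcauchy p X" "\<forall>N\<ge>M. ppow_dvd p E (X N)"
  shows "padic_norm p X \<le> real p powr (- real_of_int E)" "padic_norm p X \<ge> 0"
proof -
  have lim: "(\<lambda>N. pabs p (X N)) \<longlonglongrightarrow> padic_norm p X"
    using pcauchy_pabs_convergent[OF assms(1)] unfolding padic_norm_def convergent_LIMSEQ_iff .
  have "\<forall>N\<ge>M. pabs p (X N) \<le> real p powr (- real_of_int E)"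
    using assms(2) ppow_dvd_imp_pabs_le[OF p] by blast
  with lim show "padic_norm p X \<le> real p powr (- real_of_int E)" by (intro LIMSEQ_le_const2) blast+
  show "padic_norm p X \<ge> 0" using lim by (rule LIMSEQ_le_const) (auto simp: pabs_nonneg)
qed

lemma pcauchy_diff: "pcauchy p X \<Longrightarrow> pcauchy p Y \<Longrightarrow> pcauchy p (\<lambda>N. X N - Y N)"
  unfolding pcauchy_def
proof (intro allI)
  fix E
  assume "\<forall>E. \<exists>M. \<forall>m\<ge>M. \<forall>k\<ge>M. ppow_dvd p E (X m - X k)"
    and "\<forall>E. \<exists>M. \<forall>m\<ge>M. \<forall>k\<ge>M. ppow_dvd p E (Y m - Y k)"
  then obtain M1 M2 where M1: "\<forall>m\<ge>M1. \<forall>k\<ge>M1. ppow_dvd p E (X m - X k)"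
    and M2: "\<forall>m\<ge>M2. \<forall>k\<ge>M2. ppow_dvd p E (Y m - Y k)" by blast
  have "ppow_dvd p E ((X m - Y m) - (X k - Y k))" if "m \<ge> max M1 M2" "k \<ge> max M1 M2" for m k
    using ppow_dvd_diff[OF p, of E "X m - X k" "Y m - Y k"] M1 M2 that by (simp add: algebra_simps)
  then show "\<exists>M. \<forall>m\<ge>M. \<forall>k\<ge>M. ppow_dvd p E (X m - Y m - (X k - Y k))" by blast
qed

lemma pcauchy_const: "pcauchy p (\<lambda>N. c)"
  unfolding pcauchy_def using ppow_dvd_0[OF p] by simp

lemma pcauchy_minus: "pcauchy p X \<Longrightarrow> pcauchy p (\<lambda>N. - X N)"
  using pcauchy_diff[OF pcauchy_const[of 0], of X] by simp

lemma pcauchy_add: "pcauchy p X \<Longrightarrow> pcauchy p Y \<Longrightarrow> pcauchy p (\<lambda>N. X N + Y N)"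
  using pcauchy_diff[of X "\<lambda>N. - Y N"] pcauchy_minus[of Y] by simp

lemma pcauchy_sum:
  "finite A \<Longrightarrow> (\<And>x. x \<in> A \<Longrightarrow> pcauchy p (F x)) \<Longrightarrow> pcauchy p (\<lambda>N. \<Sum>x\<in>A. F x N)"
proof (induction A rule: finite_induct)
  case empty then show ?case using pcauchy_const by simp
next
  case (insert x A) then show ?case using pcauchy_add[of "F x" "\<lambda>N. \<Sum>x\<in>A. F x N"] by simp
qed

lemma pcauchy_cmult: assumes "pcauchy p X" shows "pcauchy p (\<lambda>N. c * X N)"
  unfolding pcauchy_def
proof
  fix E
  obtain e where e: "ppow_dvd p e c" using ppow_dvd_exists[OF p] by blast
  obtain M where M: "\<forall>m\<ge>M. \<forall>k\<ge>M. ppow_dvd p (E - e) (X m - X k)"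
    using assms unfolding pcauchy_def by blast
  have "ppow_dvd p E (c * X m - c * X k)" if "m \<ge> M" "k \<ge> M" for m k
    using ppow_dvd_mult[OF p e, of "E - e" "X m - X k"] M that by (simp add: algebra_simps)
  then show "\<exists>M. \<forall>m\<ge>M. \<forall>k\<ge>M. ppow_dvd p E (c * X m - c * X k)" by blast
qed

lemma padic_eq_refl: "pcauchy p X \<Longrightarrow> padic_eq p X X"
  unfolding padic_eq_def by (simp add: pcauchy_imp_padic_cauchy pabs_def)

lemma padic_limI:
  assumes "pcauchy p L" "\<And>m. pcauchy p (F m)"
    and approx: "\<And>E. \<exists>M. \<forall>m\<ge>M. \<exists>M'. \<forall>N\<ge>M'. ppow_dvd p E (F m N - L N)"
  shows "padic_lim p F L"
  unfolding padic_lim_def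
proof (intro conjI allI)
  show "padic_cauchy p L" by (rule pcauchy_imp_padic_cauchy[OF assms(1)])
  show "padic_cauchy p (F m)" for m by (rule pcauchy_imp_padic_cauchy[OF assms(2)])
  show "(\<lambda>m. padic_norm p (\<lambda>N. F m N - L N)) \<longlonglongrightarrow> 0"
  proof (rule LIMSEQ_I)
    fix r :: real assume "r > 0"
    then obtain E where E: "real p powr (- real_of_int E) < r" using ex_prime_powr_neg_less by blast
    obtain M where M: "\<forall>m\<ge>M. \<exists>M'. \<forall>N\<ge>M'. ppow_dvd p E (F m N - L N)" using approx by blast
    have "norm (padic_norm p (\<lambda>N. F m N - L N) - 0) < r" if m: "m \<ge> M" for m
    proof -
      obtain M' where M': "\<forall>N\<ge>M'. ppow_dvd p E (F m N - L N)" using M m by blast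
      have X: "pcauchy p (\<lambda>N. F m N - L N)" using pcauchy_diff[OF assms(2) assms(1)] .
      have "padic_norm p (\<lambda>N. F m N - L N) \<le> real p powr (- real_of_int E)"
        by (rule padic_norm_bounds(1)[OF X M'])
      moreover have "padic_norm p (\<lambda>N. F m N - L N) \<ge> 0"
        by (rule padic_norm_bounds(2)[OF X M'])
      ultimately show ?thesis using E by simp
    qed
    then show "\<exists>M. \<forall>m\<ge>M. norm (padic_norm p (\<lambda>N. F m N - L N) - 0) < r" by blast
  qed
qed

end

section \<open>Riemann sums of the Volkenborn integral\<close>

definition volkenborn_sum :: "nat \<Rightarrow> nat \<Rightarrow> (nat \<Rightarrow> rat) \<Rightarrow> rat" where
  "volkenborn_sum p m f = (\<Sum>k<p ^ m. f k) / of_nat p ^ m"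

lemma sum_lessThan_mult_regroup:
  fixes g :: "nat \<Rightarrow> 'a::comm_monoid_add"
  shows "(\<Sum>t<c * P. g t) = (\<Sum>k<P. \<Sum>i<c. g (k + i * P))"
proof -
  have "(\<Sum>t<c * P. g t) = (\<Sum>i<c. sum g {i * P..<i * P + P})"
    using sum.nat_group[of g P c] by simp
  also have "\<dots> = (\<Sum>i<c. \<Sum>k<P. g (k + i * P))"
    using sum.shift_bounds_nat_ivl[of g 0 "_ * P" P] by (simp add: atLeast0LessThan add.commute)
  also have "\<dots> = (\<Sum>k<P. \<Sum>i<c. g (k + i * P))" by (rule sum.swap)
  finally show ?thesis .
qed

lemma sum_lessThan_shift_diff:
  fixes f :: "nat \<Rightarrow> 'a::ab_group_add"
  shows "(\<Sum>k<P. f (k + k')) = (\<Sum>k<P. f k) + (\<Sum>\<nu><k'. f (P + \<nu>) - f \<nu>)"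
proof (induction k')
  case (Suc k')
  have "(\<Sum>k<P. f (k + Suc k')) = (\<Sum>k<Suc P. f (k + k')) - f k'"
    using sum.lessThan_Suc_shift[of "\<lambda>k. f (k + k')" P] by simp
  also have "\<dots> = (\<Sum>k<P. f (k + k')) + (f (P + k') - f k')" by simp
  finally show ?case using Suc by simp
qed simp

lemma volkenborn_sum_diff: "volkenborn_sum p m (\<lambda>k. f k - g k) = volkenborn_sum p m f - volkenborn_sum p m g"
  unfolding volkenborn_sum_def by (simp add: sum_subtractf diff_divide_distrib)

lemma volkenborn_sum_cmult: "volkenborn_sum p m (\<lambda>k. c * f k) = c * volkenborn_sum p m f"
  unfolding volkenborn_sum_def by (simp add: sum_distrib_left[symmetric])

lemma volkenborn_sum_sum:
  "volkenborn_sum p m (\<lambda>k. \<Sum>a\<in>A. f a k) = (\<Sum>a\<in>A. volkenborn_sum p m (f a))"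
  unfolding volkenborn_sum_def by (simp add: sum.swap[of _ A] sum_divide_distrib)

lemma volkenborn_sum_shift:
  "volkenborn_sum p m (\<lambda>k. f (k + k')) =
     volkenborn_sum p m f + (\<Sum>\<nu><k'. (f (p ^ m + \<nu>) - f \<nu>) / of_nat p ^ m)"
  unfolding volkenborn_sum_def sum_lessThan_shift_diff by (simp add: add_divide_distrib sum_divide_distrib)

context
  fixes p :: nat
  assumes p: "prime p"
begin

lemma volkenbornI:
  assumes "pcauchy p L" "\<And>k. pcauchy p (f k)"
    and approx: "\<And>E. \<exists>M. \<forall>m\<ge>M. \<exists>M'. \<forall>N\<ge>M'. ppow_dvd p E (volkenborn_sum p m (\<lambda>k. f k N) - L N)"
  shows "volkenborn p f L"
  unfolding volkenborn_def
proof (rule padic_limI[OF p assms(1) _ approx[unfolded volkenborn_sum_def]])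
  fix m
  have "pcauchy p (\<lambda>N. (1 / of_nat p ^ m) * (\<Sum>k<p ^ m. f k N))"
    by (intro pcauchy_cmult[OF p] pcauchy_sum[OF p] assms(2)) simp
  then show "pcauchy p (\<lambda>N. (\<Sum>k<p ^ m. f k N) / of_nat p ^ m)" by simp
qed

lemma ppow_dvd_volkenborn_sum:
  "(\<And>k. ppow_dvd p e (f k)) \<Longrightarrow> ppow_dvd p (e - int m) (volkenborn_sum p m f)"
  unfolding volkenborn_sum_def by (intro ppow_dvd_divide_prime_power[OF p] ppow_dvd_sum[OF p]) auto

lemma volkenborn_sum_Suc_diff:
  "volkenborn_sum p (Suc m) f - volkenborn_sum p m f =
     (\<Sum>k<p ^ m. \<Sum>c<p. f (k + c * p ^ m) - f k) / of_nat p ^ Suc m"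
proof -
  have "(\<Sum>t<p ^ Suc m. f t) = (\<Sum>k<p ^ m. \<Sum>c<p. f (k + c * p ^ m))"
    using sum_lessThan_mult_regroup[of f p "p ^ m"] by (simp add: mult.commute)
  moreover have "volkenborn_sum p m f = (\<Sum>k<p ^ m. \<Sum>c<p. f k) / of_nat p ^ Suc m"
    unfolding volkenborn_sum_def using of_nat_prime_nonzero[OF p]
    by (simp add: sum_distrib_left[symmetric] field_simps)
  ultimately show ?thesis unfolding volkenborn_sum_def by (simp add: sum_subtractf diff_divide_distrib)
qed

lemma ppow_dvd_telescope:
  assumes step: "\<And>m. ppow_dvd p (int m + C) (g (Suc m) - g m)" and "m \<le> N"
  shows "ppow_dvd p (int m + C) (g N - g m)"
  using \<open>m \<le> N\<close>
proof (induction N rule: dec_induct)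
  case (step N)
  have "ppow_dvd p (int m + C) (g (Suc N) - g N)"
    using assms(1)[of N] ppow_dvd_mono[OF p] step.hyps by (meson add_right_mono of_nat_le_iff)
  from ppow_dvd_add[OF p this step.IH] show ?case by simp
qed (simp add: ppow_dvd_0[OF p])

lemma ppow_dvd_volkenborn_sum_lipschitz:
  assumes bound: "\<And>k. ppow_dvd p b (f k)"
    and lip: "\<And>k h m. p ^ m dvd h \<Longrightarrow> ppow_dvd p (int m + \<beta>) (f (k + h) - f k)"
  shows "ppow_dvd p (min b (\<beta> - 1)) (volkenborn_sum p m f)"
proof (induction m)
  case 0
  then show ?case
    using bound[of 0] ppow_dvd_mono[OF p, of "min b (\<beta> - 1)" b] by (simp add: volkenborn_sum_def)
next
  case (Suc m)
  have "ppow_dvd p (int m + \<beta>) (\<Sum>k<p ^ m. \<Sum>c<p. f (k + c * p ^ m) - f k)"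
    using lip by (intro ppow_dvd_sum[OF p]) auto
  from ppow_dvd_divide_prime_power[OF p this, of "Suc m"]
  have "ppow_dvd p (\<beta> - 1) (volkenborn_sum p (Suc m) f - volkenborn_sum p m f)"
    by (simp add: volkenborn_sum_Suc_diff algebra_simps)
  then have "ppow_dvd p (min b (\<beta> - 1)) (volkenborn_sum p (Suc m) f - volkenborn_sum p m f)"
    using ppow_dvd_mono[OF p] by (meson min.cobounded2)
  from ppow_dvd_add[OF p this Suc.IH] show ?case by simp
qed

lemma volkenborn_sum_Suc_diff_taylor:
  assumes taylor: "\<And>k h m. p ^ m dvd h \<Longrightarrow> ppow_dvd p (2 * int m + \<gamma>) (f (k + h) - f k - of_nat h * w k)"
    and w_bound: "\<And>m. ppow_dvd p b (volkenborn_sum p m w)"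
  shows "ppow_dvd p (int m + min (b - 1) (\<gamma> - 1)) (volkenborn_sum p (Suc m) f - volkenborn_sum p m f)"
proof -
  let ?P = "p ^ m"
  let ?R = "\<lambda>k c. f (k + c * ?P) - f k - of_nat (c * ?P) * w k"
  have "(\<Sum>k<?P. \<Sum>c<p. f (k + c * ?P) - f k) =
        (\<Sum>k<?P. \<Sum>c<p. of_nat c * of_nat ?P * w k) + (\<Sum>k<?P. \<Sum>c<p. ?R k c)"
    by (simp add: sum.distrib[symmetric])
  also have "(\<Sum>k<?P. \<Sum>c<p. of_nat c * of_nat ?P * w k) =
      of_nat (\<Sum>c<p. c) * (of_nat ?P * of_nat ?P) * volkenborn_sum p m w"
    unfolding volkenborn_sum_def using of_nat_prime_nonzero[OF p]
    by (simp add: sum_distrib_left[symmetric] sum_distrib_right[symmetric] field_simps)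
  finally have eq: "volkenborn_sum p (Suc m) f - volkenborn_sum p m f =
      of_nat (\<Sum>c<p. c) * (of_nat ?P * of_nat ?P) * volkenborn_sum p m w / of_nat p ^ Suc m
      + (\<Sum>k<?P. \<Sum>c<p. ?R k c) / of_nat p ^ Suc m"
    by (simp add: volkenborn_sum_Suc_diff add_divide_distrib)
  have "ppow_dvd p (0 + (int m + int m)) (of_nat (\<Sum>c<p. c) * (of_nat ?P * of_nat ?P))"
    by (intro ppow_dvd_mult[OF p] ppow_dvd_of_nat[OF p]) (simp_all add: ppow_dvd_prime_power[OF p])
  from ppow_dvd_divide_prime_power[OF p ppow_dvd_mult[OF p this w_bound[of m]], of "Suc m"]
  have A: "ppow_dvd p (int m + (b - 1))
      (of_nat (\<Sum>c<p. c) * (of_nat ?P * of_nat ?P) * volkenborn_sum p m w / of_nat p ^ Suc m)"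
    by (simp add: algebra_simps)
  have "ppow_dvd p (2 * int m + \<gamma>) (\<Sum>k<?P. \<Sum>c<p. ?R k c)"
    by (intro ppow_dvd_sum[OF p] taylor) simp_all
  from ppow_dvd_divide_prime_power[OF p this, of "Suc m"]
  have B: "ppow_dvd p (int m + (\<gamma> - 1)) ((\<Sum>k<?P. \<Sum>c<p. ?R k c) / of_nat p ^ Suc m)"
    by (simp add: algebra_simps)
  show ?thesis unfolding eq
    by (rule ppow_dvd_add[OF p]; rule ppow_dvd_mono[OF p _ A] ppow_dvd_mono[OF p _ B]; simp)
qed

text \<open>The discrete analogue of \<open>\<integral> f(t + k) dt = \<integral> f(t) dt + \<Sum>\<nu><k. f'(\<nu>)\<close>.\<close>
lemma ppow_dvd_volkenborn_sum_shifts: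
  assumes deriv: "\<And>\<nu>. ppow_dvd p e ((f (p ^ m + \<nu>) - f \<nu>) / of_nat p ^ m - d \<nu>)"
    and coeff: "\<And>k. k \<in> K \<Longrightarrow> ppow_dvd p ec (c k)" and "finite K"
  shows "ppow_dvd p (ec + e)
    ((\<Sum>k\<in>K. c k * volkenborn_sum p m (\<lambda>t. f (t + k))) - (\<Sum>k\<in>K. c k) * volkenborn_sum p m f
      - (\<Sum>k\<in>K. c k * (\<Sum>\<nu><k. d \<nu>)))"
proof -
  have "(\<Sum>k\<in>K. c k * volkenborn_sum p m (\<lambda>t. f (t + k))) - (\<Sum>k\<in>K. c k) * volkenborn_sum p m f
      - (\<Sum>k\<in>K. c k * (\<Sum>\<nu><k. d \<nu>))
    = (\<Sum>k\<in>K. c k * (\<Sum>\<nu><k. (f (p ^ m + \<nu>) - f \<nu>) / of_nat p ^ m - d \<nu>))"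
    unfolding volkenborn_sum_shift
    by (simp add: sum_subtractf algebra_simps sum.distrib sum_distrib_left sum_distrib_right)
  also have "ppow_dvd p (ec + e) \<dots>"
    using assms by (intro ppow_dvd_sum[OF p] ppow_dvd_mult[OF p]) auto
  finally show ?thesis .
qed

end

section \<open>Teichmueller congruences\<close>

lemma diff_dvd_power_diff: "(x - y) dvd (x ^ n - y ^ n)" for x y :: "'a :: comm_ring_1"
proof (cases n)
  case (Suc m) then show ?thesis using diff_power_eq_sum[of x m y] by simp
qed simp

context
  fixes p :: nat
  assumes p: "prime p"
begin

lemma prime_power_dvd_pow_prime_diff:
  fixes a b :: int
  assumes "int p ^ e dvd a - b" "e \<ge> 1"
  shows "int p ^ Suc e dvd a ^ p - b ^ p"
proof -
  have p1: "p \<ge> 1" using prime_gt_0_nat[OF p] by simp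
  have eq: "a ^ p - b ^ p = (a - b) * (\<Sum>i<p. a ^ i * b ^ (p - 1 - i))"
    using diff_power_eq_sum[of a "p - 1" b] p1 by simp
  have "int p dvd int p ^ e" using assms(2) by (simp add: dvd_power)
  then have "int p dvd a - b" using assms(1) by (rule dvd_trans)
  then have ab: "[a = b] (mod int p)" by (simp add: cong_iff_dvd_diff)
  have "[(\<Sum>i<p. a ^ i * b ^ (p - 1 - i)) = (\<Sum>i<p. b ^ i * b ^ (p - 1 - i))] (mod int p)"
    by (intro cong_sum cong_mult cong_pow ab cong_refl)
  moreover have "(\<Sum>i<p. b ^ i * b ^ (p - 1 - i)) = int p * b ^ (p - 1)"
    by (simp add: power_add[symmetric])
  ultimately have "int p dvd (\<Sum>i<p. a ^ i * b ^ (p - 1 - i))"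
    by (metis cong_dvd_iff dvd_triv_left)
  then have "int p ^ e * int p dvd a ^ p - b ^ p" using assms(1) eq by (simp add: mult_dvd_mono)
  then show ?thesis by (simp add: mult.commute)
qed

lemma prime_power_dvd_pow_prime_power_diff:
  fixes a b :: int
  assumes "int p dvd a - b"
  shows "int p ^ Suc N dvd a ^ (p ^ N) - b ^ (p ^ N)"
proof (induction N)
  case (Suc N)
  have "int p ^ Suc (Suc N) dvd (a ^ (p ^ N)) ^ p - (b ^ (p ^ N)) ^ p"
    using prime_power_dvd_pow_prime_diff[OF Suc.IH] by simp
  then show ?case by (simp add: power_mult[symmetric] mult.commute)
qed (use assms in simp)

lemma fermat_prime_power_cong:
  assumes "\<not> p dvd q"
  shows "[q ^ (p ^ N) = q] (mod p)"
proof (induction N)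
  case (Suc N)
  have "[q * q ^ (p - 1) = q * 1] (mod p)" by (intro cong_mult cong_refl fermat_theorem[OF p assms])
  moreover have "q * q ^ (p - 1) = q ^ p" using prime_gt_0_nat[OF p] by (simp flip: power_Suc)
  ultimately have "[q ^ p = q] (mod p)" by simp
  moreover have "[(q ^ (p ^ N)) ^ p = q ^ p] (mod p)" by (intro cong_pow Suc.IH)
  ultimately have "[(q ^ (p ^ N)) ^ p = q] (mod p)" by (rule cong_trans[rotated])
  then show ?case by (simp add: power_mult[symmetric] mult.commute)
qed simp

text \<open>The congruence behind the Teichmueller limit \<open>\<omega>(q) = lim q\<^bsup>p\<^sup>N\<^esup>\<close>.\<close>
lemma ppow_dvd_teichmueller_diff:
  assumes "\<not> p dvd q" "[q = q'] (mod p)" "N \<le> N'"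
  shows "ppow_dvd p (int N + 1) ((of_nat q ^ (p ^ N')) ^ a - (of_nat q' ^ (p ^ N)) ^ a)"
proof -
  have "[q ^ (p ^ (N' - N)) = q'] (mod p)"
    using fermat_prime_power_cong[OF assms(1)] assms(2) cong_trans by blast
  then have "int p dvd int q ^ (p ^ (N' - N)) - int q'"
    by (metis cong_iff_dvd_diff cong_int_iff of_nat_power)
  from prime_power_dvd_pow_prime_power_diff[OF this, of N]
  have "int p ^ Suc N dvd int q ^ (p ^ N') - int q' ^ (p ^ N)"
    using assms(3) by (simp add: power_mult[symmetric] power_add[symmetric])
  then have "int p ^ Suc N dvd (int q ^ (p ^ N')) ^ a - (int q' ^ (p ^ N)) ^ a"
    using diff_dvd_power_diff dvd_trans by blast
  from ppow_dvd_of_int_dvd[OF p this] show ?thesis by (simp add: add.commute)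
qed

end

section \<open>The Hurwitz integrand\<close>

lemma power_add_second_order:
  fixes Q H :: "'a :: comm_ring_1"
  shows "\<exists>z. (Q + H) ^ a = Q ^ a + of_nat a * H * Q ^ (a - 1) + H\<^sup>2 * z"
proof (induction a)
  case (Suc a)
  then obtain z where z: "(Q + H) ^ a = Q ^ a + of_nat a * H * Q ^ (a - 1) + H\<^sup>2 * z" by blast
  show ?case
  proof (cases a)
    case (Suc b)
    have "(Q + H) ^ Suc a = (Q + H) * (Q ^ a + of_nat a * H * Q ^ (a - 1) + H\<^sup>2 * z)" using z by simp
    also have "\<dots> = Q ^ Suc a + of_nat (Suc a) * H * Q ^ (Suc a - 1)
        + H\<^sup>2 * (of_nat a * Q ^ (a - 1) + (Q + H) * z)"
      using Suc by (simp add: algebra_simps power2_eq_square)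
    finally show ?thesis by blast
  qed (rule exI[of _ 0], simp)
qed (rule exI[of _ 0], simp)

text \<open>\<open>n + j/p = qnum p j n / p\<close>.\<close>
definition qnum :: "nat \<Rightarrow> nat \<Rightarrow> nat \<Rightarrow> nat" where
  "qnum p j n = p * n + j"

definition inv_qpow :: "nat \<Rightarrow> nat \<Rightarrow> nat \<Rightarrow> nat \<Rightarrow> rat" where
  "inv_qpow p j b n = 1 / of_nat (qnum p j n) ^ b"

definition inv_qpow_deriv :: "nat \<Rightarrow> nat \<Rightarrow> nat \<Rightarrow> nat \<Rightarrow> rat" where
  "inv_qpow_deriv p j a n = - (of_nat a * of_nat p) * inv_qpow p j (Suc a) n"

text \<open>The \<open>N\<close>-th approximation of \<open>\<integral> \<langle>t + j/p\<rangle>\<^sup>-\<^sup>a dt\<close>: on \<open>\<int>\<^sub>p\<close> we have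
  \<open>\<langle>n + j/p\<rangle> = qnum p j n / \<omega>(j)\<close>, and \<open>\<omega>(j)\<close> is approximated by \<open>j\<^bsup>p\<^sup>N\<^esup>\<close>.\<close>
definition hurwitz_integral :: "nat \<Rightarrow> nat \<Rightarrow> nat \<Rightarrow> nat \<Rightarrow> rat" where
  "hurwitz_integral p j a N = (of_nat j ^ (p ^ N)) ^ a * volkenborn_sum p N (inv_qpow p j a)"

context
  fixes p j :: nat
  assumes p: "prime p" and j: "\<not> p dvd j"
begin

lemma qnum_power_not_dvd: "\<not> int p dvd int (qnum p j n) ^ b"
proof
  assume "int p dvd int (qnum p j n) ^ b"
  then have "p dvd p * n + j" unfolding qnum_def using p prime_dvd_power
    by (metis int_dvd_int_iff of_nat_power prime_nat_iff_prime)
  then show False using j by (simp add: dvd_add_right_iff)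
qed

lemma qnum_nonzero: "qnum p j n \<noteq> 0"
  using qnum_power_not_dvd[of n 1] by (metis dvd_0_right of_nat_0 power_one_right)

lemma qnum_cong: "[qnum p j n = j] (mod p)"
  unfolding qnum_def by (simp add: cong_def)

lemma qnum_power_inverse_unit: "ppow_dvd p 0 (1 / of_nat (qnum p j n) ^ b)"
  using ppow_dvd_inverse_unit[OF p qnum_power_not_dvd[of n b]] by simp

lemma teichmueller_inverse_unit: "ppow_dvd p 0 (1 / of_nat j ^ (p ^ N))"
proof -
  have "prime (int p)" using p by simp
  then have "\<not> int p dvd int j ^ (p ^ N)" using j by (metis int_dvd_int_iff prime_dvd_power)
  from ppow_dvd_inverse_unit[OF p this] show ?thesis by simp
qed

lemma j_nonzero: "j \<noteq> 0"
  using j by (metis dvd_0_right)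

lemma teichmueller_nonzero: "(of_nat j ^ (p ^ N) :: rat) \<noteq> 0"
  using j_nonzero by simp

lemma ppow_dvd_inv_qpow: "ppow_dvd p 0 (inv_qpow p j b n)"
  unfolding inv_qpow_def using ppow_dvd_inverse_unit[OF p qnum_power_not_dvd[of n b]] by simp

lemma inv_qpow_lipschitz:
  assumes "p ^ m dvd h"
  shows "ppow_dvd p (int m + 1) (inv_qpow p j b (n + h) - inv_qpow p j b n)"
proof -
  define X where "X = int (qnum p j (n + h))"
  define Y where "Y = int (qnum p j n)"
  have "X \<noteq> 0" "Y \<noteq> 0" using qnum_nonzero unfolding X_def Y_def by auto
  then have eq: "inv_qpow p j b (n + h) - inv_qpow p j b n = of_int (Y ^ b - X ^ b) * (1 / of_int (X ^ b * Y ^ b))"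
    unfolding inv_qpow_def X_def Y_def by (simp add: field_simps)
  have "int p ^ Suc m dvd X - Y"
    using assms unfolding X_def Y_def qnum_def by (simp add: algebra_simps mult_dvd_mono flip: of_nat_power)
  then have "int p ^ Suc m dvd Y ^ b - X ^ b"
    by (metis diff_dvd_power_diff dvd_minus_iff dvd_trans minus_diff_eq)
  moreover have "\<not> int p dvd X ^ b * Y ^ b"
    using qnum_power_not_dvd p unfolding X_def Y_def by (simp add: prime_dvd_mult_iff)
  ultimately have "ppow_dvd p (int (Suc m) + 0) (of_int (Y ^ b - X ^ b) * (1 / of_int (X ^ b * Y ^ b)))"
    by (intro ppow_dvd_mult[OF p ppow_dvd_of_int_dvd[OF p] ppow_dvd_inverse_unit[OF p]])
  then show ?thesis unfolding eq by (simp add: add.commute)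
qed

lemma inv_qpow_taylor:
  assumes "p ^ m dvd h" "a \<ge> 1"
  shows "ppow_dvd p (2 * int m + 2)
    (inv_qpow p j a (n + h) - inv_qpow p j a n - of_nat h * inv_qpow_deriv p j a n)"
proof -
  define Y where "Y = int (qnum p j n)"
  define H where "H = int p * int h"
  define X where "X = Y + H"
  have X: "X = int (qnum p j (n + h))" unfolding X_def Y_def H_def qnum_def by (simp add: algebra_simps)
  have "X \<noteq> 0" "Y \<noteq> 0" using qnum_nonzero unfolding X Y_def by auto
  obtain z where z: "(Y + H) ^ a = Y ^ a + of_nat a * H * Y ^ (a - 1) + H\<^sup>2 * z"
    using power_add_second_order by blast
  define NUM where "NUM = Y ^ Suc a - X ^ a * Y + int a * H * X ^ a"
  have "inv_qpow p j a (n + h) - inv_qpow p j a n - of_nat h * inv_qpow_deriv p j a n =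
        1 / of_int X ^ a - 1 / of_int Y ^ a + of_int (int a * H) / of_int Y ^ Suc a"
    unfolding inv_qpow_def inv_qpow_deriv_def X Y_def H_def by (simp add: field_simps)
  also have "\<dots> = of_int NUM * (1 / of_int (X ^ a * Y ^ Suc a))"
    unfolding NUM_def using \<open>X \<noteq> 0\<close> \<open>Y \<noteq> 0\<close> by (simp add: field_simps)
  finally have eq: "inv_qpow p j a (n + h) - inv_qpow p j a n - of_nat h * inv_qpow_deriv p j a n
      = of_int NUM * (1 / of_int (X ^ a * Y ^ Suc a))" .
  have "int p ^ Suc m dvd H"
    using assms(1) unfolding H_def by (simp add: mult_dvd_mono flip: of_nat_power)
  then have "int p ^ Suc m * int p ^ Suc m dvd H\<^sup>2"
    by (simp add: power2_eq_square mult_dvd_mono)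
  moreover have "int p ^ Suc m * int p ^ Suc m = int p ^ (2 * m + 2)"
    unfolding power_add[symmetric] by (rule arg_cong[where f = "(^) (int p)"]) simp
  ultimately have H2: "int p ^ (2 * m + 2) dvd H\<^sup>2" by (simp only:)
  have "Y * Y ^ (a - 1) = Y ^ a" using assms(2) by (simp flip: power_Suc)
  then have "NUM = H\<^sup>2 * (int a * int a * Y ^ (a - 1) + int a * H * z - z * Y)"
    unfolding NUM_def X_def z by (simp add: algebra_simps power2_eq_square)
  then have "int p ^ (2 * m + 2) dvd NUM" using H2 by (simp only: dvd_mult2)
  moreover have "\<not> int p dvd X ^ a * Y ^ Suc a"
    unfolding X Y_def using prime_dvd_mult_iff[of "int p"] p qnum_power_not_dvd
    by (metis prime_nat_int_transfer)
  ultimately have "ppow_dvd p (int (2 * m + 2) + 0) (of_int NUM * (1 / of_int (X ^ a * Y ^ Suc a)))"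
    by (intro ppow_dvd_mult[OF p ppow_dvd_of_int_dvd[OF p] ppow_dvd_inverse_unit[OF p]])
  then show ?thesis unfolding eq by (simp add: add.commute)
qed

lemma ppow_dvd_volkenborn_sum_inv_qpow: "ppow_dvd p 0 (volkenborn_sum p m (inv_qpow p j b))"
  using ppow_dvd_volkenborn_sum_lipschitz[OF p, of 0 "inv_qpow p j b" 1 m]
    ppow_dvd_inv_qpow inv_qpow_lipschitz by simp

lemma volkenborn_sum_inv_qpow_cauchy:
  assumes "a \<ge> 1" "m \<le> N"
  shows "ppow_dvd p (int m - 1) (volkenborn_sum p N (inv_qpow p j a) - volkenborn_sum p m (inv_qpow p j a))"
proof (rule ppow_dvd_telescope[OF p _ assms(2), of "-1", simplified])
  fix m
  have "ppow_dvd p 0 (inv_qpow_deriv p j a k)" for k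
    using ppow_dvd_mult[OF p ppow_dvd_of_int[OF p, of "- (int a * int p)"] ppow_dvd_inv_qpow]
    unfolding inv_qpow_deriv_def by simp
  moreover have "ppow_dvd p (int m + 1) (inv_qpow_deriv p j a (k + h) - inv_qpow_deriv p j a k)"
    if "p ^ m dvd h" for k h m
    using ppow_dvd_mult[OF p ppow_dvd_of_int[OF p, of "- (int a * int p)"]
        inv_qpow_lipschitz[OF that, of "Suc a" k]]
    unfolding inv_qpow_deriv_def by (simp add: right_diff_distrib)
  ultimately have "ppow_dvd p 0 (volkenborn_sum p m' (inv_qpow_deriv p j a))" for m'
    using ppow_dvd_volkenborn_sum_lipschitz[OF p, of 0 _ 1 m'] by simp
  then show "ppow_dvd p (int m - 1)
      (volkenborn_sum p (Suc m) (inv_qpow p j a) - volkenborn_sum p m (inv_qpow p j a))"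
    using volkenborn_sum_Suc_diff_taylor[OF p, of 2 "inv_qpow p j a" "inv_qpow_deriv p j a" 0 m]
      inv_qpow_taylor[OF _ assms(1)] by simp
qed

lemma pcauchy_volkenborn_sum_inv_qpow:
  "a \<ge> 1 \<Longrightarrow> pcauchy p (\<lambda>N. volkenborn_sum p N (inv_qpow p j a))"
  by (rule pcauchy_rate[OF p, of 1]) (simp add: volkenborn_sum_inv_qpow_cauchy)

lemma shift_eq_qnum: "(of_nat n + of_nat j / of_nat p :: rat) = of_nat (qnum p j n) / of_nat p"
  unfolding qnum_def using of_nat_prime_nonzero[OF p] by (simp add: field_simps)

lemma pval_shift: "pval p (of_nat n + of_nat j / of_nat p) = - 1"
proof -
  have "\<not> int p dvd int (qnum p j n)" using qnum_power_not_dvd[of n 1] by simp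
  moreover have "\<not> int p dvd 1" using p by (metis not_prime_unit prime_nat_int_transfer)
  ultimately have "pval p (of_int (int (qnum p j n)) / of_int 1 * of_nat p powi (- 1)) = - 1"
    by (rule pval_unit_times_power[OF p])
  moreover have "(of_nat n + of_nat j / of_nat p :: rat) = of_int (int (qnum p j n)) / of_int 1 * of_nat p powi (- 1)"
    unfolding shift_eq_qnum by (simp add: power_int_minus divide_inverse)
  ultimately show ?thesis by simp
qed

lemma omega_shift:
  "omega p (of_nat n + of_nat j / of_nat p) N = of_nat p powi (- 1) * of_nat (qnum p j n) ^ (p ^ N)"
proof -
  have "punit p (of_nat n + of_nat j / of_nat p) = of_nat (qnum p j n)"
    unfolding punit_def pval_shift using prime_gt_0_nat[OF p] by (simp add: shift_eq_qnum)
  then show ?thesis unfolding omega_def pval_shift by simp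
qed

lemma pangle_shift:
  "pangle p (of_nat n + of_nat j / of_nat p) N = of_nat (qnum p j n) / of_nat (qnum p j n) ^ (p ^ N)"
  unfolding pangle_def omega_shift using prime_gt_0_nat[OF p] qnum_nonzero[of n]
  by (simp add: shift_eq_qnum power_int_minus field_simps)

lemma pangle_shift_power_int:
  "pangle p (of_nat n + of_nat j / of_nat p) N powi (1 - int (Suc a)) =
     (of_nat (qnum p j n) ^ (p ^ N)) ^ a * inv_qpow p j a n"
  unfolding pangle_shift inv_qpow_def by (simp add: power_int_minus power_divide field_simps)

lemma omega_frac_power_int:
  "omega p (of_nat j / of_nat p) N powi (1 - int (Suc a)) = of_nat p ^ a / (of_nat j ^ (p ^ N)) ^ a"
proof -
  have "omega p (of_nat j / of_nat p) N = of_nat p powi (- 1) * of_nat j ^ (p ^ N)"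
    using omega_shift[of 0 N] by (simp add: qnum_def)
  then show ?thesis
    by (simp add: of_nat_prime_nonzero[OF p] power_int_minus power_mult_distrib power_inverse field_simps)
qed

lemma pcauchy_hurwitz_integral:
  assumes "a \<ge> 1" shows "pcauchy p (hurwitz_integral p j a)"
proof (rule pcauchy_rate[OF p, of 1])
  fix N N' :: nat assume NN: "N \<le> N'"
  let ?W = "\<lambda>N. (of_nat j ^ (p ^ N) :: rat) ^ a"
  let ?V = "\<lambda>N. volkenborn_sum p N (inv_qpow p j a)"
  have "hurwitz_integral p j a N' - hurwitz_integral p j a N = ?W N' * (?V N' - ?V N) + (?W N' - ?W N) * ?V N"
    unfolding hurwitz_integral_def by (simp add: algebra_simps)
  moreover have "ppow_dvd p (0 + (int N - 1)) (?W N' * (?V N' - ?V N))"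
    using ppow_dvd_mult[OF p ppow_dvd_of_nat[OF p, of "(j ^ (p ^ N')) ^ a"]
        volkenborn_sum_inv_qpow_cauchy[OF assms NN]] by simp
  moreover have "ppow_dvd p ((int N + 1) + 0) ((?W N' - ?W N) * ?V N)"
    using ppow_dvd_mult[OF p ppow_dvd_teichmueller_diff[OF p j cong_refl NN]
        ppow_dvd_volkenborn_sum_inv_qpow] .
  ultimately show "ppow_dvd p (int N - 1) (hurwitz_integral p j a N' - hurwitz_integral p j a N)"
    using ppow_dvd_add[OF p] ppow_dvd_mono[OF p, of "int N - 1" "int N + 1 + 0"] by simp
qed

lemma pcauchy_hurwitz_integrand:
  "pcauchy p (\<lambda>N. pangle p (of_nat k + of_nat j / of_nat p) N powi (1 - int (Suc a)))"
  unfolding pangle_shift_power_int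
proof (rule pcauchy_rate[OF p, of "- 1"])
  fix N N' :: nat assume NN: "N \<le> N'"
  let ?Q = "\<lambda>N. (of_nat (qnum p j k) ^ (p ^ N) :: rat) ^ a"
  have "ppow_dvd p ((int N + 1) + 0) ((?Q N' - ?Q N) * inv_qpow p j a k)"
    using ppow_dvd_mult[OF p ppow_dvd_teichmueller_diff[OF p _ cong_refl NN] ppow_dvd_inv_qpow]
      qnum_power_not_dvd[of k 1] by simp
  then show "ppow_dvd p (int N - - 1) (?Q N' * inv_qpow p j a k - ?Q N * inv_qpow p j a k)"
    by (simp add: algebra_simps)
qed

text \<open>The Riemann sums of \<open>\<langle>t + j/p\<rangle>\<^sup>-\<^sup>a\<close> differ from \<open>hurwitz_integral\<close> by the error
  of replacing \<open>(qnum p j k)\<^bsup>p\<^sup>N\<^esup>\<close> by \<open>j\<^bsup>p\<^sup>N\<^esup>\<close> (small as \<open>qnum p j k \<equiv> j mod p\<close>) and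
  the error of truncating the Riemann sums at level \<open>m\<close> instead of \<open>N\<close>.\<close>
lemma volkenborn_sum_hurwitz_integrand_approx:
  assumes a: "a \<ge> 1" and "m \<le> N" and E: "E \<le> int N + 1 - int m" "E \<le> int m - 1"
  shows "ppow_dvd p E (volkenborn_sum p m (\<lambda>k. pangle p (of_nat k + of_nat j / of_nat p) N powi (1 - int (Suc a)))
      - hurwitz_integral p j a N)"
proof -
  let ?Q = "\<lambda>k N. (of_nat (qnum p j k) ^ (p ^ N) :: rat) ^ a"
  let ?W = "\<lambda>N. (of_nat j ^ (p ^ N) :: rat) ^ a"
  let ?V = "\<lambda>N. volkenborn_sum p N (inv_qpow p j a)"
  have eq: "volkenborn_sum p m (\<lambda>k. pangle p (of_nat k + of_nat j / of_nat p) N powi (1 - int (Suc a)))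
      - hurwitz_integral p j a N
    = volkenborn_sum p m (\<lambda>k. (?Q k N - ?W N) * inv_qpow p j a k) - ?W N * (?V N - ?V m)"
    unfolding pangle_shift_power_int hurwitz_integral_def left_diff_distrib volkenborn_sum_diff
      volkenborn_sum_cmult by (simp add: algebra_simps)
  have A: "ppow_dvd p (int N + 1 - int m) (volkenborn_sum p m (\<lambda>k. (?Q k N - ?W N) * inv_qpow p j a k))"
  proof (rule ppow_dvd_volkenborn_sum[OF p])
    fix k
    from ppow_dvd_mult[OF p ppow_dvd_teichmueller_diff[OF p _ qnum_cong order.refl] ppow_dvd_inv_qpow]
    show "ppow_dvd p (int N + 1) ((?Q k N - ?W N) * inv_qpow p j a k)"
      using qnum_power_not_dvd[of k 1] by simp
  qed
  from \<open>m \<le> N\<close> have B: "ppow_dvd p (0 + (int m - 1)) (?W N * (?V N - ?V m))"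
    using ppow_dvd_mult[OF p ppow_dvd_of_nat[OF p, of "(j ^ (p ^ N)) ^ a"]
        volkenborn_sum_inv_qpow_cauchy[OF a, of m N]] by simp
  show ?thesis
    unfolding eq using E by (intro ppow_dvd_diff[OF p] ppow_dvd_mono[OF p _ A] ppow_dvd_mono[OF p _ B]) simp_all
qed

lemma volkenborn_hurwitz_integrand:
  assumes a: "a \<ge> 1"
  shows "volkenborn p (\<lambda>k N. pangle p (of_nat k + of_nat j / of_nat p) N powi (1 - int (Suc a)))
           (hurwitz_integral p j a)"
proof (rule volkenbornI[OF p pcauchy_hurwitz_integral[OF a] pcauchy_hurwitz_integrand])
  fix E :: int
  have "m \<le> N" "E \<le> int N + 1 - int m" "E \<le> int m - 1"
    if "m \<ge> nat (E + 1)" "N \<ge> m + nat E + 1" for m N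
    using that by linarith+
  then show "\<exists>M. \<forall>m\<ge>M. \<exists>M'. \<forall>N\<ge>M'. ppow_dvd p E
      (volkenborn_sum p m (\<lambda>k. pangle p (of_nat k + of_nat j / of_nat p) N powi (1 - int (Suc a)))
        - hurwitz_integral p j a N)"
    using volkenborn_sum_hurwitz_integrand_approx[OF a] by blast
qed

lemma padic_hurwitz_zeta_frac:
  assumes "i \<ge> 2"
  shows "padic_hurwitz_zeta p i (of_nat j / of_nat p) (\<lambda>N. hurwitz_integral p j (i - 1) N / (of_nat i - 1))"
proof -
  have i: "i - 1 \<ge> 1" "Suc (i - 1) = i" using assms by auto
  have "pcauchy p (\<lambda>N. (1 / (of_nat i - 1)) * hurwitz_integral p j (i - 1) N)"
    by (rule pcauchy_cmult[OF p pcauchy_hurwitz_integral[OF i(1)]])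
  then have "padic_eq p (\<lambda>N. hurwitz_integral p j (i - 1) N / (of_nat i - 1))
      (\<lambda>N. hurwitz_integral p j (i - 1) N / (of_nat i - 1))"
    by (intro padic_eq_refl[OF p]) simp
  with volkenborn_hurwitz_integrand[OF i(1)] i(2) show ?thesis
    unfolding padic_hurwitz_zeta_def by auto
qed

lemma omega_frac_times_zeta:
  assumes "i \<ge> 2"
  shows "omega p (of_nat j / of_nat p) N powi (1 - int i) * (hurwitz_integral p j (i - 1) N / (of_nat i - 1))
    = of_nat p ^ (i - 1) / (of_nat i - 1) * volkenborn_sum p N (inv_qpow p j (i - 1))"
proof -
  have "i = Suc (i - 1)" using assms by simp
  then have om: "omega p (of_nat j / of_nat p) N powi (1 - int i) = of_nat p ^ (i - 1) / (of_nat j ^ (p ^ N)) ^ (i - 1)"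
    using omega_frac_power_int[of N "i - 1"] by simp
  show ?thesis unfolding om hurwitz_integral_def using j_nonzero by (simp add: field_simps)
qed

end

section \<open>The truncated logarithm\<close>

definition log_trunc :: "nat \<Rightarrow> rat \<Rightarrow> rat" where
  "log_trunc N z = (\<Sum>l = 1..N. (- 1) ^ (l - 1) * z ^ l / of_nat l)"

definition log_trunc_deriv :: "nat \<Rightarrow> rat \<Rightarrow> rat" where
  "log_trunc_deriv N z = (\<Sum>i<N. (- z) ^ i)"

lemma plog_eq_log_trunc: "plog p Y N = log_trunc N (Y N - 1)"
  unfolding plog_def log_trunc_def ..

lemma log_trunc_deriv_geometric: "(1 + z) * log_trunc_deriv N z = 1 - (- z) ^ N"
  unfolding log_trunc_deriv_def by (induction N) (auto simp: algebra_simps)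

lemma log_trunc_deriv_eq: "log_trunc_deriv N z = (\<Sum>l = 1..N. (- 1) ^ (l - 1) * z ^ (l - 1))"
proof (induction N)
  case (Suc N)
  have "log_trunc_deriv (Suc N) z = log_trunc_deriv N z + (- 1) ^ (Suc N - 1) * z ^ (Suc N - 1)"
    by (simp add: log_trunc_deriv_def power_minus')
  then show ?case by (simp add: Suc.IH)
qed (simp add: log_trunc_deriv_def)

lemma power_add_expansion:
  fixes z d :: rat
  assumes "l \<ge> 1"
  shows "((z + d) ^ l - z ^ l) / of_nat l - z ^ (l - 1) * d =
         (\<Sum>k = 2..l. of_nat (l choose k) / of_nat l * d ^ k * z ^ (l - k))"
proof -
  let ?f = "\<lambda>k. of_nat (l choose k) * d ^ k * z ^ (l - k)"
  have "(z + d) ^ l = (\<Sum>k = 0..l. ?f k)"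
    using binomial_ring[of d z l] by (simp add: add.commute atMost_atLeast0)
  also have "\<dots> = z ^ l + (of_nat l * d * z ^ (l - 1) + (\<Sum>k = 2..l. ?f k))"
    using assms by (simp add: sum.atLeast_Suc_atMost numeral_2_eq_2)
  finally have "(z + d) ^ l - z ^ l = of_nat l * d * z ^ (l - 1) + (\<Sum>k = 2..l. ?f k)"
    by simp
  moreover have "(of_nat l :: rat) \<noteq> 0" using assms by simp
  ultimately show ?thesis by (simp add: sum_divide_distrib field_simps)
qed

lemma double_le_two_power: "2 * v \<le> (2::nat) ^ v"
proof (induction v)
  case (Suc v) then show ?case by (cases v) auto
qed simp

lemma add_two_le_three_power: "v \<ge> 1 \<Longrightarrow> v + 2 \<le> (3::nat) ^ v"
proof (induction v)
  case (Suc v) then show ?case by (cases v) auto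
qed simp

context
  fixes p :: nat
  assumes p: "prime p"
begin

lemma prime_power_multiplicity_le: "l \<ge> 1 \<Longrightarrow> p ^ multiplicity p l \<le> l"
  using multiplicity_dvd[of p l] by (simp add: dvd_imp_le)

lemma double_multiplicity_le:
  assumes "l \<ge> 1" shows "2 * multiplicity p l \<le> l"
  using power_mono[of 2 p "multiplicity p l"] prime_ge_2_nat[OF p]
    prime_power_multiplicity_le[OF assms] double_le_two_power[of "multiplicity p l"] by linarith

lemma multiplicity_add_two_le:
  assumes "p \<ge> 3" "i \<ge> 2" shows "multiplicity p i + 2 \<le> i"
proof (cases "multiplicity p i = 0")
  case False
  have "3 ^ multiplicity p i \<le> p ^ multiplicity p i" using assms(1) by (simp add: power_mono)
  then show ?thesis
    using prime_power_multiplicity_le[of i] assms add_two_le_three_power[of "multiplicity p i"] False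
    by linarith
qed (use assms in simp)

lemma log_trunc_lipschitz:
  assumes a: "ppow_dvd p 1 a" and b: "ppow_dvd p 1 b" and ab: "ppow_dvd p e (a - b)"
  shows "ppow_dvd p e (log_trunc N a - log_trunc N b)"
  unfolding log_trunc_def sum_subtractf[symmetric]
proof (rule ppow_dvd_sum[OF p])
  fix l assume "l \<in> {1..N}"
  then obtain n where l: "l = Suc n" by (cases l) auto
  define S where "S = (\<Sum>i<Suc n. a ^ i * b ^ (n - i))"
  have S: "ppow_dvd p (int n) S"
    unfolding S_def
  proof (rule ppow_dvd_sum[OF p])
    fix i assume "i \<in> {..<Suc n}"
    then have "int i * 1 + int (n - i) * 1 = int n" by simp
    then show "ppow_dvd p (int n) (a ^ i * b ^ (n - i))"
      using ppow_dvd_mult[OF p ppow_dvd_power[OF p a, of i] ppow_dvd_power[OF p b, of "n - i"]] by simp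
  qed simp
  have "a ^ l - b ^ l = (a - b) * S"
    unfolding S_def l by (rule diff_power_eq_sum)
  then have eq: "(- 1) ^ (l - 1) * a ^ l / of_nat l - (- 1) ^ (l - 1) * b ^ l / of_nat l =
      (- 1) ^ (l - 1) * (a - b) * S * (1 / of_nat l)"
    by (metis (no_types, lifting) diff_divide_distrib mult.assoc right_diff_distrib times_divide_eq_right
        mult.right_neutral)
  have "ppow_dvd p (0 + e + int n + - int (multiplicity p l)) ((- 1) ^ (l - 1) * (a - b) * S * (1 / of_nat l))"
    by (intro ppow_dvd_mult[OF p] ppow_dvd_sign[OF p] ab S ppow_dvd_inverse_of_nat[OF p]) (simp add: l)
  moreover have "2 * multiplicity p l \<le> l" using double_multiplicity_le l by simp
  then have "e \<le> 0 + e + int n + - int (multiplicity p l)" using l by simp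
  ultimately show "ppow_dvd p e ((- 1) ^ (l - 1) * a ^ l / of_nat l - (- 1) ^ (l - 1) * b ^ l / of_nat l)"
    unfolding eq using ppow_dvd_mono[OF p] by blast
qed simp

lemma log_trunc_tail:
  assumes a: "ppow_dvd p 1 a" and "N \<le> N'" and E: "2 * E \<le> int N"
  shows "ppow_dvd p E (log_trunc N' a - log_trunc N a)"
proof -
  obtain k where N': "N' = N + k" using \<open>N \<le> N'\<close> le_Suc_ex by blast
  have "log_trunc N' a - log_trunc N a = (\<Sum>l = Suc N..N'. (- 1) ^ (l - 1) * a ^ l / of_nat l)"
    unfolding log_trunc_def N' using sum.ub_add_nat[of 1 N "\<lambda>l. (- 1) ^ (l - 1) * a ^ l / of_nat l" k]
    by simp
  also have "ppow_dvd p E \<dots>"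
  proof (rule ppow_dvd_sum[OF p])
    fix l assume l: "l \<in> {Suc N..N'}"
    have "ppow_dvd p (0 + int l * 1 + - int (multiplicity p l)) ((- 1) ^ (l - 1) * a ^ l * (1 / of_nat l))"
      by (intro ppow_dvd_mult[OF p] ppow_dvd_sign[OF p]
          ppow_dvd_power[OF p a] ppow_dvd_inverse_of_nat[OF p]) (use l in simp_all)
    moreover have "E \<le> 0 + int l * 1 + - int (multiplicity p l)"
      using double_multiplicity_le[of l] l E by simp
    ultimately show "ppow_dvd p E ((- 1) ^ (l - 1) * a ^ l / of_nat l)"
      using ppow_dvd_mono[OF p] by fastforce
  qed simp
  finally show ?thesis .
qed

lemma ppow_dvd_binomial_term:
  assumes p3: "p \<ge> 3" and z: "ppow_dvd p 1 z" and d: "ppow_dvd p e d" and e: "e \<ge> 1"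
    and k: "2 \<le> k" "k \<le> l"
  shows "ppow_dvd p (2 * e) (of_nat (l choose k) / of_nat l * d ^ k * z ^ (l - k))"
proof -
  have "of_nat k * of_nat (l choose k) = (of_nat l * of_nat ((l - 1) choose (k - 1)) :: rat)"
    using times_binomial_minus1_eq[of k l] k by (simp flip: of_nat_mult)
  then have eq: "of_nat (l choose k) / of_nat l * d ^ k * z ^ (l - k) =
      of_nat ((l - 1) choose (k - 1)) * (1 / of_nat k) * d ^ k * z ^ (l - k)"
    using k by (simp add: field_simps)
  have "ppow_dvd p (0 + - int (multiplicity p k) + int k * e + int (l - k) * 1)
      (of_nat ((l - 1) choose (k - 1)) * (1 / of_nat k) * d ^ k * z ^ (l - k))"
    using k by (intro ppow_dvd_mult[OF p] ppow_dvd_of_nat[OF p] ppow_dvd_inverse_of_nat[OF p]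
        ppow_dvd_power[OF p d] ppow_dvd_power[OF p z]) simp
  moreover have "int (multiplicity p k) + 2 \<le> int k" using multiplicity_add_two_le[OF p3, of k] k by simp
  moreover have "(int k - 2) * 1 \<le> (int k - 2) * e" using e k by (intro mult_left_mono) auto
  ultimately show ?thesis
    unfolding eq by (elim ppow_dvd_mono[OF p, rotated]) (simp add: algebra_simps)
qed

lemma log_trunc_taylor:
  assumes p3: "p \<ge> 3" and z: "ppow_dvd p 1 z" and d: "ppow_dvd p e d" and e: "e \<ge> 1"
  shows "ppow_dvd p (2 * e) (log_trunc N (z + d) - log_trunc N z - d * log_trunc_deriv N z)"
proof -
  have "log_trunc N (z + d) - log_trunc N z - d * log_trunc_deriv N z =
      (\<Sum>l = 1..N. (- 1) ^ (l - 1) * (((z + d) ^ l - z ^ l) / of_nat l - z ^ (l - 1) * d))"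
    unfolding log_trunc_def log_trunc_deriv_eq sum_distrib_left sum_subtractf[symmetric]
    by (rule sum.cong[OF refl]) (simp add: algebra_simps diff_divide_distrib)
  also have "\<dots> =
      (\<Sum>l = 1..N. (- 1) ^ (l - 1) * (\<Sum>k = 2..l. of_nat (l choose k) / of_nat l * d ^ k * z ^ (l - k)))"
  proof (rule sum.cong[OF refl])
    fix l :: nat assume "l \<in> {1..N}"
    then have "l \<ge> 1" by simp
    show "(- 1) ^ (l - 1) * (((z + d) ^ l - z ^ l) / of_nat l - z ^ (l - 1) * d) =
      (- 1) ^ (l - 1) * (\<Sum>k = 2..l. of_nat (l choose k) / of_nat l * d ^ k * z ^ (l - k))"
      by (subst power_add_expansion[OF \<open>l \<ge> 1\<close>]) (rule refl)
  qed
  also have "ppow_dvd p (2 * e) \<dots>"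
    by (intro ppow_dvd_sum[OF p] ppow_dvd_mult[OF p ppow_dvd_sign[OF p], simplified]
        ppow_dvd_binomial_term[OF p3 z d e]) auto
  finally show ?thesis .
qed

end

section \<open>The logarithm of the angle of \<open>t + j/p\<close>\<close>

definition angle_approx :: "nat \<Rightarrow> nat \<Rightarrow> nat \<Rightarrow> nat \<Rightarrow> rat" where
  "angle_approx p j N n = of_nat (qnum p j n) / of_nat (qnum p j n) ^ (p ^ N)"

text \<open>Since \<open>\<omega>(qnum p j n) = \<omega>(j)\<close>, the \<open>N\<close>-th approximation of the angle may also use
  \<open>j\<^bsup>p\<^sup>N\<^esup>\<close> in the denominator; this variant is affine in \<open>n\<close>.\<close>
definition angle_lin :: "nat \<Rightarrow> nat \<Rightarrow> nat \<Rightarrow> nat \<Rightarrow> rat" where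
  "angle_lin p j N n = of_nat (qnum p j n) / of_nat j ^ (p ^ N)"

definition log_angle :: "nat \<Rightarrow> nat \<Rightarrow> nat \<Rightarrow> nat \<Rightarrow> rat" where
  "log_angle p j N n = log_trunc N (angle_approx p j N n - 1)"

context
  fixes p j :: nat
  assumes p: "prime p" and j: "\<not> p dvd j"
begin

lemma plog_pangle_shift: "plog p (pangle p (of_nat n + of_nat j / of_nat p)) N = log_angle p j N n"
  unfolding plog_eq_log_trunc log_angle_def angle_approx_def pangle_shift[OF p j] ..

lemma angle_lin_sub_one: "ppow_dvd p 1 (angle_lin p j N n - 1)"
proof -
  have "ppow_dvd p (int 0 + 1) ((of_nat j ^ (p ^ N)) ^ 1 - (of_nat (qnum p j n) ^ (p ^ 0)) ^ 1)"
    using ppow_dvd_teichmueller_diff[OF p j cong_sym[OF qnum_cong[OF p j]]] by blast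
  then have "ppow_dvd p 1 (of_nat j ^ (p ^ N) - of_nat (qnum p j n))" by simp
  from ppow_dvd_mult[OF p ppow_dvd_minus[OF p this] teichmueller_inverse_unit[OF p j]]
  show ?thesis unfolding angle_lin_def using teichmueller_nonzero[OF p j] by (simp add: field_simps)
qed

lemma angle_approx_sub_lin: "ppow_dvd p (int N + 1) (angle_approx p j N n - angle_lin p j N n)"
proof -
  let ?q = "of_nat (qnum p j n) :: rat"
  have "ppow_dvd p (int N + 1) ((of_nat j ^ (p ^ N)) ^ 1 - (?q ^ (p ^ N)) ^ 1)"
    by (rule ppow_dvd_teichmueller_diff[OF p j cong_sym[OF qnum_cong[OF p j]]]) simp
  then have "ppow_dvd p (0 + (int N + 1) + 0 + 0)
      (?q * (of_nat j ^ (p ^ N) - ?q ^ (p ^ N)) * (1 / ?q ^ (p ^ N)) * (1 / of_nat j ^ (p ^ N)))"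
    by (intro ppow_dvd_mult[OF p] ppow_dvd_of_nat[OF p] qnum_power_inverse_unit[OF p j]
        teichmueller_inverse_unit[OF p j]) simp
  moreover have "?q \<noteq> 0" using qnum_nonzero[OF p j] by simp
  then have "?q * (of_nat j ^ (p ^ N) - ?q ^ (p ^ N)) * (1 / ?q ^ (p ^ N)) * (1 / of_nat j ^ (p ^ N))
      = angle_approx p j N n - angle_lin p j N n"
    unfolding angle_approx_def angle_lin_def using teichmueller_nonzero[OF p j] by (simp add: field_simps)
  ultimately show ?thesis by simp
qed

lemma angle_approx_sub_one: "ppow_dvd p 1 (angle_approx p j N n - 1)"
proof -
  have "ppow_dvd p 1 (angle_approx p j N n - angle_lin p j N n)"
    using ppow_dvd_mono[OF p _ angle_approx_sub_lin] by simp
  from ppow_dvd_add[OF p this angle_lin_sub_one[of N n]] show ?thesis by simp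
qed

lemma pcauchy_log_angle: "pcauchy p (\<lambda>N. log_angle p j N n)"
proof (rule pcauchyI[OF p])
  fix E
  have "ppow_dvd p E (log_angle p j N' n - log_angle p j N n)"
    if N: "N \<ge> nat (2 * E + 1)" and NN: "N' \<ge> N" for N N'
  proof -
    let ?q = "of_nat (qnum p j n) :: rat"
    have "2 * E \<le> int N" using N by linarith
    then have tail: "ppow_dvd p E
        (log_trunc N' (angle_approx p j N' n - 1) - log_trunc N (angle_approx p j N' n - 1))"
      by (rule log_trunc_tail[OF p angle_approx_sub_one NN])
    have "\<not> p dvd qnum p j n" using qnum_power_not_dvd[OF p j, of n 1] by simp
    from ppow_dvd_teichmueller_diff[OF p this cong_refl NN, of 1]
    have "ppow_dvd p (int N + 1) ((?q ^ (p ^ N')) ^ 1 - (?q ^ (p ^ N)) ^ 1)" by simp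
    then have "ppow_dvd p (0 + (int N + 1) + 0 + 0)
        (?q * (?q ^ (p ^ N') - ?q ^ (p ^ N)) * (1 / ?q ^ (p ^ N)) * (1 / ?q ^ (p ^ N')))"
      by (intro ppow_dvd_mult[OF p] ppow_dvd_of_nat[OF p] qnum_power_inverse_unit[OF p j]) simp
    moreover have "?q \<noteq> 0" using qnum_nonzero[OF p j] by simp
    then have "?q * (?q ^ (p ^ N') - ?q ^ (p ^ N)) * (1 / ?q ^ (p ^ N)) * (1 / ?q ^ (p ^ N'))
        = (angle_approx p j N n - 1) - (angle_approx p j N' n - 1)"
      unfolding angle_approx_def by (simp add: field_simps)
    ultimately have "ppow_dvd p (int N + 1) ((angle_approx p j N n - 1) - (angle_approx p j N' n - 1))"
      by simp
    then have "ppow_dvd p (int N + 1)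
        (log_trunc N (angle_approx p j N' n - 1) - log_trunc N (angle_approx p j N n - 1))"
      by (rule log_trunc_lipschitz[OF p angle_approx_sub_one angle_approx_sub_one
          ppow_dvd_diff_commute[OF p]])
    moreover have "E \<le> int N + 1" using N by linarith
    ultimately have "ppow_dvd p E
        (log_trunc N (angle_approx p j N' n - 1) - log_trunc N (angle_approx p j N n - 1))"
      using ppow_dvd_mono[OF p] by blast
    from ppow_dvd_add[OF p tail this] show ?thesis unfolding log_angle_def by simp
  qed
  then show "\<exists>M. \<forall>N\<ge>M. \<forall>N'\<ge>N. ppow_dvd p E (log_angle p j N' n - log_angle p j N n)" by blast
qed

lemma angle_lin_shift:
  "angle_lin p j N (p ^ m + n) - angle_lin p j N n = of_nat p * of_nat p ^ m / of_nat j ^ (p ^ N)"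
  unfolding angle_lin_def qnum_def by (simp add: algebra_simps add_divide_distrib)

lemma ppow_dvd_angle_lin_shift: "ppow_dvd p (int m + 1) (angle_lin p j N (p ^ m + n) - angle_lin p j N n)"
proof -
  have "ppow_dvd p (1 + int m + 0) (of_nat p * of_nat p ^ m * (1 / of_nat j ^ (p ^ N)))"
    by (intro ppow_dvd_mult[OF p] teichmueller_inverse_unit[OF p j])
      (use ppow_dvd_prime_power[OF p, of 1] ppow_dvd_prime_power[OF p, of m] in simp_all)
  then show ?thesis unfolding angle_lin_shift by (simp add: add.commute)
qed

text \<open>On the affine variant of the angle, the first-order term of the truncated logarithm is a
  geometric sum, which evaluates to \<open>p\<^sup>m / (n + j/p)\<close> up to an error divisible by \<open>p\<^sup>N\<close>.\<close>
lemma angle_lin_shift_times_log_trunc_deriv: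
  "(angle_lin p j N (p ^ m + n) - angle_lin p j N n) * log_trunc_deriv N (angle_lin p j N n - 1)
     = of_nat p * of_nat p ^ m * (1 - (- (angle_lin p j N n - 1)) ^ N) / of_nat (qnum p j n)"
proof -
  let ?q = "of_nat (qnum p j n) :: rat"
  let ?w = "of_nat j ^ (p ^ N) :: rat"
  define L where "L = log_trunc_deriv N (angle_lin p j N n - 1)"
  define G where "G = 1 - (- (angle_lin p j N n - 1)) ^ N"
  have "angle_lin p j N n * L = G"
    unfolding L_def G_def using log_trunc_deriv_geometric[of "angle_lin p j N n - 1" N] by simp
  then have qL: "?q * L = ?w * G"
    unfolding angle_lin_def using teichmueller_nonzero[OF p j] by (simp add: field_simps)
  have "?q \<noteq> 0" using qnum_nonzero[OF p j] by simp
  then have "of_nat p * of_nat p ^ m / ?w * L = of_nat p * of_nat p ^ m * (?q * L) / (?w * ?q)"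
    using teichmueller_nonzero[OF p j] by (simp add: field_simps)
  also have "\<dots> = of_nat p * of_nat p ^ m * G / ?q"
    unfolding qL using j_nonzero[OF p j] by simp
  finally show ?thesis unfolding angle_lin_shift L_def G_def .
qed

text \<open>Up to \<open>p\<^bsup>N+1\<^esup>\<close>, the
  angle may be replaced by its affine variant, on which the truncated logarithm is expanded to
  second order.\<close>
lemma log_angle_difference_quotient:
  assumes p3: "p \<ge> 3" and E: "E \<le> int N + 1 - int m" "E \<le> int m + 2"
  shows "ppow_dvd p E ((log_angle p j N (p ^ m + \<nu>) - log_angle p j N \<nu>) / of_nat p ^ m
           - 1 / (of_nat \<nu> + of_nat j / of_nat p))"
proof -
  let ?n = "p ^ m + \<nu>"
  let ?q = "of_nat (qnum p j \<nu>) :: rat"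
  let ?z = "angle_lin p j N \<nu> - 1"
  define A where "A = (\<lambda>n. log_angle p j N n - log_trunc N (angle_lin p j N n - 1))"
  define d where "d = angle_lin p j N ?n - angle_lin p j N \<nu>"
  define zN where "zN = (- ?z) ^ N"
  define B where "B = log_trunc N (?z + d) - log_trunc N ?z - d * log_trunc_deriv N ?z"
  have "?z + d = angle_lin p j N ?n - 1" unfolding d_def by simp
  then have diff: "log_angle p j N ?n - log_angle p j N \<nu> = (A ?n - A \<nu>) + B + d * log_trunc_deriv N ?z"
    unfolding A_def B_def by (simp only:)
  have recip: "1 / (of_nat \<nu> + of_nat j / of_nat p) = of_nat p / ?q"
    using shift_eq_qnum[OF p j, of \<nu>] by simp
  have "?q \<noteq> 0" using qnum_nonzero[OF p j] by simp
  then have eq: "(log_angle p j N ?n - log_angle p j N \<nu>) / of_nat p ^ m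
        - 1 / (of_nat \<nu> + of_nat j / of_nat p)
      = (A ?n - A \<nu>) / of_nat p ^ m + B / of_nat p ^ m - of_nat p * zN * (1 / ?q)"
    unfolding diff recip d_def angle_lin_shift_times_log_trunc_deriv zN_def[symmetric]
    using of_nat_prime_nonzero[OF p] by (simp add: field_simps)
  have "ppow_dvd p (int N + 1) ((angle_approx p j N n - 1) - (angle_lin p j N n - 1))" for n
    using angle_approx_sub_lin by simp
  then have "ppow_dvd p (int N + 1) (A n)" for n
    unfolding A_def log_angle_def by (rule log_trunc_lipschitz[OF p angle_approx_sub_one angle_lin_sub_one])
  then have 1: "ppow_dvd p (int N + 1 - int m) ((A ?n - A \<nu>) / of_nat p ^ m)"
    by (intro ppow_dvd_divide_prime_power[OF p] ppow_dvd_diff[OF p])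
  have 2: "ppow_dvd p (2 * (int m + 1) - int m) (B / of_nat p ^ m)"
    unfolding B_def d_def by (intro ppow_dvd_divide_prime_power[OF p]
        log_trunc_taylor[OF p p3 angle_lin_sub_one ppow_dvd_angle_lin_shift]) simp
  have 3: "ppow_dvd p (1 + int N * 1 + 0) (of_nat p * zN * (1 / ?q))"
    unfolding zN_def
    using ppow_dvd_mult[OF p ppow_dvd_mult[OF p ppow_dvd_prime_power[OF p, of 1]
        ppow_dvd_power[OF p ppow_dvd_minus[OF p angle_lin_sub_one]]] qnum_power_inverse_unit[OF p j, of \<nu> 1]]
    by simp
  show ?thesis unfolding eq
    by (intro ppow_dvd_diff[OF p] ppow_dvd_add[OF p] ppow_dvd_mono[OF p _ 1] ppow_dvd_mono[OF p _ 2]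
        ppow_dvd_mono[OF p _ 3]) (use E in simp_all)
qed

end

section \<open>Vanishing of the residue sum\<close>

lemma pochhammer_le_power:
  fixes a :: "'a :: linordered_semidom"
  assumes "a \<ge> 0" shows "pochhammer a n \<le> (a + of_nat n) ^ n"
proof (induction n)
  case (Suc n)
  have "pochhammer a (Suc n) = pochhammer a n * (a + of_nat n)" by (rule pochhammer_Suc)
  also have "\<dots> \<le> (a + of_nat n) ^ n * (a + of_nat n)"
    using Suc assms by (intro mult_right_mono) auto
  also have "\<dots> \<le> (a + of_nat (Suc n)) ^ n * (a + of_nat (Suc n))"
    using assms by (intro mult_mono power_mono) auto
  finally show ?case by (simp only: power_Suc2)
qed simp

lemma power_le_pochhammer:
  fixes a :: "'a :: linordered_semidom"
  assumes "a \<ge> 0" shows "a ^ n \<le> pochhammer a n"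
proof (induction n)
  case (Suc n)
  have "a ^ Suc n = a ^ n * a" by (simp add: mult.commute)
  also have "\<dots> \<le> pochhammer a n * (a + of_nat n)"
    using Suc assms order_trans[OF zero_le_power[OF assms] Suc] by (intro mult_mono) auto
  finally show ?case by (simp add: pochhammer_Suc)
qed simp

lemma Rn_numerator_bound:
  fixes t :: rat
  assumes "t \<ge> of_nat n + 1"
  shows "(\<Prod>j = 1..p - 1. pochhammer (t + of_nat j / of_nat p) n) \<le> (2 * t) ^ (n * (p - 1))"
proof -
  have "(\<Prod>j = 1..p - 1. pochhammer (t + of_nat j / of_nat p) n) \<le> (\<Prod>j = 1..p - 1. (2 * t) ^ n)"
  proof (intro prod_mono conjI)
    fix j assume j: "j \<in> {1..p - 1}"
    then have jp: "of_nat j / of_nat p \<le> (1::rat)" by (auto simp: divide_le_eq_1)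
    have "(0::rat) < of_nat n + 1" by simp
    then have t0: "t + of_nat j / of_nat p > 0" using assms by (simp add: add_pos_nonneg)
    then show "0 \<le> pochhammer (t + of_nat j / of_nat p) n" by (rule pochhammer_nonneg)
    have "pochhammer (t + of_nat j / of_nat p) n \<le> (t + of_nat j / of_nat p + of_nat n) ^ n"
      using t0 by (intro pochhammer_le_power) simp
    also have "\<dots> \<le> (2 * t) ^ n" using jp assms t0 by (intro power_mono) auto
    finally show "pochhammer (t + of_nat j / of_nat p) n \<le> (2 * t) ^ n" .
  qed
  then show ?thesis by (simp add: power_mult)
qed

text \<open>The numerator of \<open>R\<^sub>n\<close> has degree at least two less than its denominator.\<close>
lemma Rn_degree_gap:
  assumes p: "p \<ge> 2" and s: "s > 0" and n: "n > (p + s) ^ 4"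
  shows "M0 p s + 2 + n * (p - 1) \<le> (n + 1) * (p - 1 + s)"
proof -
  have "p ^ N0 p s dvd p - 1 + s" unfolding N0_def by (rule multiplicity_dvd)
  then have "p ^ N0 p s \<le> p + s" using s by (metis dvd_imp_le le_trans diff_le_self add_le_mono1 add_gr_0)
  then have "p * p * p ^ N0 p s \<le> (p + s) * (p + s) * (p + s)" by (intro mult_mono) auto
  then have "p ^ (2 + N0 p s) \<le> (p + s) * (p + s) * (p + s)"
    by (simp add: power_add power2_eq_square)
  also have "\<dots> \<le> (p + s) ^ 4"
    using p by (simp add: power_def numeral_eq_Suc mult.assoc)
  finally have "p ^ (2 + N0 p s) * s \<le> n * s" using n by simp
  moreover have "p ^ (2 + N0 p s) * s \<ge> 1" using p s by simp
  ultimately have "M0 p s + 2 \<le> n * s + 1" unfolding M0_def by linarith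
  moreover have "(n + 1) * (q + s) = n * q + n * s + (q + s)" for q by (simp add: algebra_simps)
  then have "(n + 1) * (p - 1 + s) = n * (p - 1) + n * s + (p - 1 + s)" by blast
  ultimately show ?thesis using s by linarith
qed

lemma Rn_growth_bound:
  fixes t :: rat
  assumes p: "p \<ge> 1" and t: "t \<ge> of_nat n + 1"
    and gap: "M0 p s + 2 + n * (p - 1) \<le> (n + 1) * (p - 1 + s)"
  shows "\<bar>t * Rn p s n t\<bar> \<le> of_nat p ^ (p * n) * fact n ^ s * 2 ^ (n * (p - 1)) / t"
proof -
  define K where "K = p - 1 + s"
  define A :: rat where "A = of_nat p ^ (p * n) * fact n ^ s"
  define P where "P = (\<Prod>j = 1..p - 1. pochhammer (t + of_nat j / of_nat p) n)"
  define D where "D = pochhammer t (n + 1) ^ K"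
  have "(0::rat) < of_nat n + 1" by simp
  with t have t0: "t > 0" by linarith
  have "A \<ge> 0" unfolding A_def by simp
  have P0: "P \<ge> 0" unfolding P_def using t0
    by (intro prod_nonneg pochhammer_nonneg) (auto intro: add_pos_nonneg)
  have "t ^ ((n + 1) * K) \<le> D"
    unfolding D_def power_mult using t0 by (intro power_mono power_le_pochhammer) auto
  moreover have tpos: "t ^ ((n + 1) * K) > 0" using t0 by simp
  ultimately have "D > 0" by linarith
  have "t * Rn p s n t = A * t ^ (M0 p s + 1) * P / D"
    unfolding Rn_def A_def P_def D_def K_def by (simp add: algebra_simps)
  moreover have "A * t ^ (M0 p s + 1) * P / D \<ge> 0" using \<open>A \<ge> 0\<close> P0 \<open>D > 0\<close> t0 by simp
  ultimately have "\<bar>t * Rn p s n t\<bar> = A * t ^ (M0 p s + 1) * P / D"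
    by (metis abs_of_nonneg)
  also have "\<dots> \<le> A * t ^ (M0 p s + 1) * (2 * t) ^ (n * (p - 1)) / t ^ ((n + 1) * K)"
    using \<open>A \<ge> 0\<close> P0 Rn_numerator_bound[OF t, of p, folded P_def] \<open>D > 0\<close> \<open>t ^ ((n + 1) * K) \<le> D\<close> t0 tpos
    by (intro frac_le mult_left_mono mult_nonneg_nonneg) auto
  also have "\<dots> = A * 2 ^ (n * (p - 1)) * t ^ (M0 p s + 1 + n * (p - 1)) / t ^ ((n + 1) * K)"
    by (simp add: power_mult_distrib power_add)
  also have "\<dots> \<le> A * 2 ^ (n * (p - 1)) * t ^ ((n + 1) * K - 1) / t ^ ((n + 1) * K)"
    using gap t \<open>A \<ge> 0\<close> tpos unfolding K_def by (intro divide_right_mono mult_left_mono power_increasing) auto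
  also have "\<dots> = A * 2 ^ (n * (p - 1)) / t"
  proof -
    have "(n + 1) * K \<ge> 1" using gap unfolding K_def by linarith
    then have "t ^ ((n + 1) * K) = t ^ ((n + 1) * K - 1) * t"
      by (metis Suc_diff_1 less_le_trans zero_less_one power_Suc2)
    then show ?thesis using t0 by (simp add: field_simps)
  qed
  finally show ?thesis unfolding A_def .
qed

lemma partial_fraction_term_bound:
  fixes t c :: rat
  assumes t: "t \<ge> 1" and k: "k \<ge> 1" and i: "i \<ge> 1"
  shows "\<bar>c * t / (t + of_nat k) ^ i - (if i = 1 then c else 0)\<bar> \<le> \<bar>c\<bar> * of_nat k / t"
proof (cases "i = 1")
  case True
  have tk: "t + of_nat k > 0" using t by simp
  have "c * t / (t + of_nat k) - c = - (c * of_nat k / (t + of_nat k))" using tk by (simp add: field_simps)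
  then have "\<bar>c * t / (t + of_nat k) ^ i - (if i = 1 then c else 0)\<bar> = \<bar>c\<bar> * of_nat k / (t + of_nat k)"
    using True tk by (simp add: abs_mult)
  also have "\<dots> \<le> \<bar>c\<bar> * of_nat k / t" using t tk by (intro divide_left_mono mult_nonneg_nonneg) auto
  finally show ?thesis .
next
  case False
  have tk: "t + of_nat k \<ge> 1" using t by simp
  have "t * t \<le> (t + of_nat k) ^ 2" using t by (simp add: power2_eq_square mult_mono)
  also have "\<dots> \<le> (t + of_nat k) ^ i" using tk i False by (intro power_increasing) auto
  finally have "t / (t + of_nat k) ^ i \<le> t / (t * t)" using t by (intro divide_left_mono) auto
  also have "\<dots> \<le> of_nat k / t" using k t by (simp add: divide_right_mono)
  finally have "\<bar>c\<bar> * (t / (t + of_nat k) ^ i) \<le> \<bar>c\<bar> * (of_nat k / t)" by (rule mult_left_mono) simp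
  moreover have "\<bar>c * t / (t + of_nat k) ^ i\<bar> = \<bar>c\<bar> * (t / (t + of_nat k) ^ i)"
    using t tk by (simp add: abs_mult)
  ultimately show ?thesis using False by simp
qed

text \<open>Since \<open>t R\<^sub>n(t) \<rightarrow> 0\<close> as \<open>t \<rightarrow> \<infinity>\<close>, the sum of the residues \<open>r\<^sub>1\<^sub>,\<^sub>k\<close> vanishes.\<close>
lemma residue_sum_bound:
  fixes r :: "nat \<Rightarrow> nat \<Rightarrow> rat" and T :: nat
  assumes p: "p \<ge> 2" and gap: "M0 p s + 2 + n * (p - 1) \<le> (n + 1) * (p - 1 + s)"
    and pfd: "\<And>t::rat. (\<forall>k\<in>{0..n}. t \<noteq> - of_nat k) \<Longrightarrow>
               Rn p s n t = (\<Sum>i=1..p-1+s. \<Sum>k=1..n. r i k / (t + of_nat k) ^ i)"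
    and T: "T \<ge> n + 1"
  shows "\<bar>\<Sum>k=1..n. r 1 k\<bar> \<le> (of_nat p ^ (p * n) * fact n ^ s * 2 ^ (n * (p - 1))
      + (\<Sum>i=1..p-1+s. \<Sum>k=1..n. \<bar>r i k\<bar> * of_nat k)) / of_nat T"
proof -
  define K where "K = p - 1 + s"
  define t :: rat where "t = of_nat T"
  have t1: "t \<ge> 1" and tn: "t \<ge> of_nat n + 1" unfolding t_def using T by auto
  have "(\<Sum>i=1..K. \<Sum>k=1..n. if i = 1 then r i k else 0) = (\<Sum>i=1..K. if i = 1 then (\<Sum>k=1..n. r i k) else 0)"
    by (rule sum.cong) auto
  also have "\<dots> = (\<Sum>k=1..n. r 1 k)" using p unfolding K_def by (simp add: sum.delta)
  finally have "(\<Sum>k=1..n. r 1 k) = (\<Sum>i=1..K. \<Sum>k=1..n. if i = 1 then r i k else 0)" ..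
  moreover have "t * Rn p s n t = (\<Sum>i=1..K. \<Sum>k=1..n. r i k * t / (t + of_nat k) ^ i)"
  proof -
    have dom: "\<forall>k\<in>{0..n}. t \<noteq> - of_nat k" using t1 by auto
    show ?thesis unfolding pfd[OF dom] K_def by (simp add: sum_distrib_left algebra_simps)
  qed
  ultimately have "\<bar>t * Rn p s n t - (\<Sum>k=1..n. r 1 k)\<bar> =
      \<bar>\<Sum>i=1..K. \<Sum>k=1..n. r i k * t / (t + of_nat k) ^ i - (if i = 1 then r i k else 0)\<bar>"
    by (simp add: sum_subtractf)
  also have "\<dots> \<le> (\<Sum>i=1..K. \<Sum>k=1..n. \<bar>r i k\<bar> * of_nat k / t)"
    by (rule order_trans[OF sum_abs sum_mono], rule order_trans[OF sum_abs sum_mono],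
        rule partial_fraction_term_bound[OF t1]) auto
  finally have "\<bar>t * Rn p s n t - (\<Sum>k=1..n. r 1 k)\<bar> \<le> (\<Sum>i=1..K. \<Sum>k=1..n. \<bar>r i k\<bar> * of_nat k) / t"
    by (simp add: sum_divide_distrib)
  moreover have "\<bar>t * Rn p s n t\<bar> \<le> of_nat p ^ (p * n) * fact n ^ s * 2 ^ (n * (p - 1)) / t"
    using Rn_growth_bound[OF _ tn gap] p by simp
  ultimately show ?thesis unfolding t_def K_def by (simp add: add_divide_distrib)
qed

lemma residue_sum_eq_zero:
  fixes r :: "nat \<Rightarrow> nat \<Rightarrow> rat"
  assumes p: "p \<ge> 2" and gap: "M0 p s + 2 + n * (p - 1) \<le> (n + 1) * (p - 1 + s)"
    and pfd: "\<And>t::rat. (\<forall>k\<in>{0..n}. t \<noteq> - of_nat k) \<Longrightarrow>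
               Rn p s n t = (\<Sum>i=1..p-1+s. \<Sum>k=1..n. r i k / (t + of_nat k) ^ i)"
  shows "(\<Sum>k=1..n. r 1 k) = 0"
proof (rule ccontr)
  define C where "C = of_nat p ^ (p * n) * fact n ^ s * 2 ^ (n * (p - 1))
      + (\<Sum>i=1..p-1+s. \<Sum>k=1..n. \<bar>r i k\<bar> * of_nat k)"
  assume "(\<Sum>k=1..n. r 1 k) \<noteq> 0"
  then have \<sigma>: "\<bar>\<Sum>k=1..n. r 1 k\<bar> > 0" by simp
  obtain T :: nat where "C / \<bar>\<Sum>k=1..n. r 1 k\<bar> < of_nat T" "T \<ge> n + 1"
    using reals_Archimedean2[of "C / \<bar>\<Sum>k=1..n. r 1 k\<bar>"]
    by (metis le_add2 max.cobounded1 max.cobounded2 less_le_trans of_nat_le_iff)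
  moreover have "\<bar>\<Sum>k=1..n. r 1 k\<bar> \<le> C / of_nat T"
    unfolding C_def using residue_sum_bound[OF p gap pfd \<open>T \<ge> n + 1\<close>] .
  ultimately show False using \<sigma> by (simp add: field_simps)
qed

section \<open>The Volkenborn integral of \<open>R\<^sup>~\<^sub>n(t + j/p)\<close>\<close>

definition inv_power_antideriv :: "nat \<Rightarrow> nat \<Rightarrow> nat \<Rightarrow> nat \<Rightarrow> rat" where
  "inv_power_antideriv p j i m = 1 / ((1 - of_nat i) * (of_nat m + of_nat j / of_nat p) ^ (i - 1))"

text \<open>The \<open>i\<close>-th summand of \<open>R\<^sup>~\<^sub>n(k + j/p)\<close> at precision \<open>N\<close>, an antiderivative
  of \<open>(t + j/p)\<^sup>-\<^sup>i\<close> evaluated at \<open>t = m\<close>.\<close>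
definition rtilde_term :: "nat \<Rightarrow> nat \<Rightarrow> nat \<Rightarrow> nat \<Rightarrow> nat \<Rightarrow> rat" where
  "rtilde_term p j N i m = (if i = 1 then log_angle p j N m else inv_power_antideriv p j i m)"

definition Rtilde_integral :: "nat \<Rightarrow> nat \<Rightarrow> nat \<Rightarrow> (nat \<Rightarrow> nat \<Rightarrow> rat) \<Rightarrow> nat \<Rightarrow> nat \<Rightarrow> rat" where
  "Rtilde_integral p s n r j N =
     (\<Sum>i = 1..p - 1 + s. \<Sum>k = 1..n. \<Sum>\<nu><k. r i k / (of_nat \<nu> + of_nat j / of_nat p) ^ i)
     - (\<Sum>i = 2..p - 1 + s. (\<Sum>k = 1..n. r i k) * (of_nat p ^ (i - 1) / (of_nat i - 1))
          * volkenborn_sum p N (inv_qpow p j (i - 1)))"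

context
  fixes p j :: nat
  assumes p: "prime p" and p3: "p \<ge> 3" and j: "\<not> p dvd j"
begin

lemma Rtilde_shift_eq:
  "Rtilde p s n r (of_nat k + of_nat j / of_nat p) N =
     (\<Sum>i = 1..p - 1 + s. \<Sum>k' = 1..n. r i k' * rtilde_term p j N i (k + k'))"
proof -
  have shift: "of_nat k + of_nat j / of_nat p + of_nat k' = (of_nat (k + k') + of_nat j / of_nat p :: rat)"
    for k' by simp
  have "(\<Sum>i = 1..p - 1 + s. \<Sum>k' = 1..n. r i k' * rtilde_term p j N i (k + k')) =
      (\<Sum>k' = 1..n. r 1 k' * rtilde_term p j N 1 (k + k'))
      + (\<Sum>i = 2..p - 1 + s. \<Sum>k' = 1..n. r i k' * rtilde_term p j N i (k + k'))"
    using p3 by (subst sum.atLeast_Suc_atMost) (simp_all add: numeral_2_eq_2)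
  also have "(\<Sum>i = 2..p - 1 + s. \<Sum>k' = 1..n. r i k' * rtilde_term p j N i (k + k')) =
      (\<Sum>i = 2..p - 1 + s. \<Sum>k' = 1..n. r i k' * inv_power_antideriv p j i (k + k'))"
    unfolding rtilde_term_def by (intro sum.cong) auto
  finally show ?thesis
    unfolding Rtilde_def shift plog_pangle_shift[OF p j] inv_power_antideriv_def rtilde_term_def
    by simp
qed

lemma inv_power_antideriv_eq:
  "inv_power_antideriv p j i m = of_nat p ^ (i - 1) / (1 - of_nat i) * inv_qpow p j (i - 1) m"
  unfolding inv_power_antideriv_def shift_eq_qnum[OF p j] inv_qpow_def
  using of_nat_prime_nonzero[OF p] by (simp add: power_divide)

lemma inv_shift_power: "1 / (of_nat m + of_nat j / of_nat p) ^ i = of_nat p ^ i * inv_qpow p j i m"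
  unfolding shift_eq_qnum[OF p j] inv_qpow_def using of_nat_prime_nonzero[OF p] qnum_nonzero[OF p j, of m]
  by (simp add: power_divide)

lemma rtilde_term_difference_quotient:
  assumes i: "i \<ge> 1" and E: "E \<le> int N + 1 - int m" "E \<le> int m + 2"
  shows "ppow_dvd p E ((rtilde_term p j N i (p ^ m + \<nu>) - rtilde_term p j N i \<nu>) / of_nat p ^ m
           - 1 / (of_nat \<nu> + of_nat j / of_nat p) ^ i)"
proof (cases "i = 1")
  case True
  then show ?thesis
    unfolding rtilde_term_def using log_angle_difference_quotient[OF p j p3 E] by simp
next
  case False
  define a where "a = i - 1"
  have a: "a \<ge> 1" "i = Suc a" using i False unfolding a_def by auto
  define c :: rat where "c = of_nat p ^ a / (1 - of_nat i)"
  define R where "R = inv_qpow p j a (\<nu> + p ^ m) - inv_qpow p j a \<nu> - of_nat (p ^ m) * inv_qpow_deriv p j a \<nu>"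
  have "(of_nat a :: rat) \<noteq> 0" using a by simp
  then have eq: "(rtilde_term p j N i (p ^ m + \<nu>) - rtilde_term p j N i \<nu>) / of_nat p ^ m
      - 1 / (of_nat \<nu> + of_nat j / of_nat p) ^ i = c * R / of_nat p ^ m"
    unfolding rtilde_term_def inv_power_antideriv_eq inv_shift_power R_def c_def inv_qpow_deriv_def
    using False of_nat_prime_nonzero[OF p] by (simp add: a field_simps add.commute)
  have "ppow_dvd p 0 c"
  proof -
    have "ppow_dvd p (int a + - int (multiplicity p a)) (of_nat p ^ a * (1 / of_nat a))"
      by (intro ppow_dvd_mult[OF p] ppow_dvd_prime_power[OF p] ppow_dvd_inverse_of_nat[OF p a(1)])
    moreover have "0 \<le> int a + - int (multiplicity p a)"
      using double_multiplicity_le[OF p a(1)] by linarith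
    moreover have "c = - (of_nat p ^ a * (1 / of_nat a))" unfolding c_def a by (simp add: field_simps)
    ultimately show ?thesis by (metis ppow_dvd_minus[OF p] ppow_dvd_mono[OF p])
  qed
  moreover have "ppow_dvd p (2 * int m + 2) R"
    unfolding R_def by (rule inv_qpow_taylor[OF p j _ a(1)]) simp
  ultimately have "ppow_dvd p (0 + (2 * int m + 2) - int m) (c * R / of_nat p ^ m)"
    by (intro ppow_dvd_divide_prime_power[OF p] ppow_dvd_mult[OF p])
  then show ?thesis unfolding eq using E ppow_dvd_mono[OF p, of E] by simp
qed

lemma pcauchy_rtilde_term: "pcauchy p (\<lambda>N. rtilde_term p j N i m)"
  unfolding rtilde_term_def
  using pcauchy_log_angle[OF p j] pcauchy_const[OF p] by (cases "i = 1") simp_all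

lemma volkenborn_sum_rtilde_term:
  assumes "i \<ge> 2"
  shows "volkenborn_sum p m (rtilde_term p j N i) =
     - (of_nat p ^ (i - 1) / (of_nat i - 1)) * volkenborn_sum p m (inv_qpow p j (i - 1))"
proof -
  have "rtilde_term p j N i = (\<lambda>k. of_nat p ^ (i - 1) / (1 - of_nat i) * inv_qpow p j (i - 1) k)"
    using assms unfolding rtilde_term_def inv_power_antideriv_eq by auto
  moreover have "(of_nat p ^ (i - 1) / (1 - of_nat i) :: rat) = - (of_nat p ^ (i - 1) / (of_nat i - 1))"
    by (simp flip: divide_minus_right)
  ultimately show ?thesis by (simp only: volkenborn_sum_cmult)
qed

text \<open>Each shift \<open>t \<mapsto> t + k\<close> in \<open>R\<^sup>~\<^sub>n(t + j/p)\<close> is undone at the cost of a sum of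
  difference quotients (first sum); the remaining Riemann sums of the summands are the Hurwitz
  approximations, compared at levels \<open>m\<close> and \<open>N\<close> (second sum). The logarithmic summand
  contributes nothing else because \<open>\<Sum>k. r 1 k = 0\<close>.\<close>
lemma volkenborn_sum_Rtilde_decomposition:
  assumes r1: "(\<Sum>k=1..n. r 1 k) = 0"
  shows "volkenborn_sum p m (\<lambda>k. Rtilde p s n r (of_nat k + of_nat j / of_nat p) N) - Rtilde_integral p s n r j N
    = (\<Sum>i=1..p - 1 + s. (\<Sum>k=1..n. r i k * volkenborn_sum p m (\<lambda>t. rtilde_term p j N i (t + k)))
          - (\<Sum>k=1..n. r i k) * volkenborn_sum p m (rtilde_term p j N i)
          - (\<Sum>k=1..n. r i k * (\<Sum>\<nu><k. 1 / (of_nat \<nu> + of_nat j / of_nat p) ^ i)))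
      + (\<Sum>i=2..p - 1 + s. (\<Sum>k=1..n. r i k) * (of_nat p ^ (i - 1) / (of_nat i - 1))
          * (volkenborn_sum p N (inv_qpow p j (i - 1)) - volkenborn_sum p m (inv_qpow p j (i - 1))))"
proof -
  let ?x = "of_nat j / of_nat p :: rat"
  define K where "K = p - 1 + s"
  define c where "c i = (\<Sum>k=1..n. r i k) * (of_nat p ^ (i - 1) / (of_nat i - 1))" for i
  define V where "V M a = volkenborn_sum p M (inv_qpow p j a)" for M a
  have "volkenborn_sum p m (\<lambda>k. Rtilde p s n r (of_nat k + ?x) N) =
      (\<Sum>i=1..K. \<Sum>k=1..n. r i k * volkenborn_sum p m (\<lambda>t. rtilde_term p j N i (t + k)))"
    unfolding Rtilde_shift_eq volkenborn_sum_sum volkenborn_sum_cmult K_def ..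
  moreover have "(\<Sum>i=1..K. (\<Sum>k=1..n. r i k) * volkenborn_sum p m (rtilde_term p j N i))
      = - (\<Sum>i=2..K. c i * V m (i - 1))"
  proof -
    have "(\<Sum>i=1..K. (\<Sum>k=1..n. r i k) * volkenborn_sum p m (rtilde_term p j N i)) =
        (\<Sum>i=2..K. (\<Sum>k=1..n. r i k) * volkenborn_sum p m (rtilde_term p j N i))"
      using r1 p3 unfolding K_def by (subst sum.atLeast_Suc_atMost) (simp_all add: numeral_2_eq_2)
    also have "\<dots> = (\<Sum>i=2..K. - (c i * V m (i - 1)))"
      unfolding c_def V_def by (intro sum.cong) (simp_all add: volkenborn_sum_rtilde_term)
    finally show ?thesis by (simp add: sum_negf)
  qed
  moreover have "(\<Sum>i=1..K. \<Sum>k=1..n. \<Sum>\<nu><k. r i k / (of_nat \<nu> + ?x) ^ i) =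
      (\<Sum>i=1..K. \<Sum>k=1..n. r i k * (\<Sum>\<nu><k. 1 / (of_nat \<nu> + ?x) ^ i))"
    by (simp add: sum_distrib_left)
  ultimately show ?thesis
    unfolding Rtilde_integral_def K_def[symmetric] c_def[symmetric] V_def[symmetric]
    by (simp add: sum_subtractf right_diff_distrib)
qed

lemma volkenborn_sum_Rtilde_approx:
  assumes r1: "(\<Sum>k=1..n. r 1 k) = 0"
    and cr: "\<And>i k. i \<in> {1..p - 1 + s} \<Longrightarrow> k \<in> {1..n} \<Longrightarrow> ppow_dvd p cr (r i k)"
    and cq: "\<And>i. i \<in> {2..p - 1 + s} \<Longrightarrow>
      ppow_dvd p cq ((\<Sum>k=1..n. r i k) * (of_nat p ^ (i - 1) / (of_nat i - 1)))"
    and e: "e \<le> int N + 1 - int m" "e \<le> int m + 2" and "m \<le> N"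
  shows "ppow_dvd p (min (cr + e) (cq + (int m - 1)))
    (volkenborn_sum p m (\<lambda>k. Rtilde p s n r (of_nat k + of_nat j / of_nat p) N) - Rtilde_integral p s n r j N)"
  unfolding volkenborn_sum_Rtilde_decomposition[where r = r and n = n, OF r1]
proof (rule ppow_dvd_add[OF p]; rule ppow_dvd_sum[OF p])
  fix i assume "i \<in> {1..p - 1 + s}"
  with cr e show "ppow_dvd p (min (cr + e) (cq + (int m - 1)))
    ((\<Sum>k=1..n. r i k * volkenborn_sum p m (\<lambda>t. rtilde_term p j N i (t + k)))
      - (\<Sum>k=1..n. r i k) * volkenborn_sum p m (rtilde_term p j N i)
      - (\<Sum>k=1..n. r i k * (\<Sum>\<nu><k. 1 / (of_nat \<nu> + of_nat j / of_nat p) ^ i)))"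
    by (intro ppow_dvd_mono[OF p min.cobounded1] ppow_dvd_volkenborn_sum_shifts[OF p]
        rtilde_term_difference_quotient) auto
next
  fix i assume "i \<in> {2..p - 1 + s}"
  with cq \<open>m \<le> N\<close> show "ppow_dvd p (min (cr + e) (cq + (int m - 1)))
    ((\<Sum>k=1..n. r i k) * (of_nat p ^ (i - 1) / (of_nat i - 1))
      * (volkenborn_sum p N (inv_qpow p j (i - 1)) - volkenborn_sum p m (inv_qpow p j (i - 1))))"
    by (intro ppow_dvd_mono[OF p min.cobounded2] ppow_dvd_mult[OF p]
        volkenborn_sum_inv_qpow_cauchy[OF p j]) auto
qed simp_all

lemma pcauchy_Rtilde_integral: "pcauchy p (Rtilde_integral p s n r j)"
proof -
  have "pcauchy p (\<lambda>N. \<Sum>i = 2..p - 1 + s. (\<Sum>k = 1..n. r i k) * (of_nat p ^ (i - 1) / (of_nat i - 1))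
      * volkenborn_sum p N (inv_qpow p j (i - 1)))"
  proof (rule pcauchy_sum[OF p])
    fix i assume "i \<in> {2..p - 1 + s}"
    then have "i - 1 \<ge> 1" by auto
    then show "pcauchy p (\<lambda>N. (\<Sum>k = 1..n. r i k) * (of_nat p ^ (i - 1) / (of_nat i - 1))
        * volkenborn_sum p N (inv_qpow p j (i - 1)))"
      by (rule pcauchy_cmult[OF p pcauchy_volkenborn_sum_inv_qpow[OF p j]])
  qed simp
  from pcauchy_diff[OF p pcauchy_const[OF p] this] show ?thesis
    unfolding Rtilde_integral_def[abs_def] .
qed

lemma volkenborn_Rtilde:
  assumes r1: "(\<Sum>k=1..n. r 1 k) = 0"
  shows "volkenborn p (\<lambda>k. Rtilde p s n r (of_nat k + of_nat j / of_nat p)) (Rtilde_integral p s n r j)"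
proof (rule volkenbornI[OF p pcauchy_Rtilde_integral])
  fix k
  have "pcauchy p (\<lambda>N. \<Sum>i = 1..p - 1 + s. \<Sum>k' = 1..n. r i k' * rtilde_term p j N i (k + k'))"
    by (intro pcauchy_sum[OF p]) (auto intro!: pcauchy_cmult[OF p] pcauchy_rtilde_term)
  then show "pcauchy p (Rtilde p s n r (of_nat k + of_nat j / of_nat p))"
    unfolding Rtilde_shift_eq[abs_def] .
next
  fix E
  obtain cr where "\<forall>(i, k) \<in> {1..p - 1 + s} \<times> {1..n}. ppow_dvd p cr (r i k)"
    using ppow_dvd_uniform[OF p, of "{1..p - 1 + s} \<times> {1..n}" "\<lambda>(i, k). r i k"] by fastforce
  then have cr: "\<And>i k. i \<in> {1..p - 1 + s} \<Longrightarrow> k \<in> {1..n} \<Longrightarrow> ppow_dvd p cr (r i k)" by blast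
  obtain cq where "\<forall>i \<in> {2..p - 1 + s}. ppow_dvd p cq ((\<Sum>k=1..n. r i k) * (of_nat p ^ (i - 1) / (of_nat i - 1)))"
    using ppow_dvd_uniform[OF p finite_atLeastAtMost,
        of 2 "p - 1 + s" "\<lambda>i. (\<Sum>k=1..n. r i k) * (of_nat p ^ (i - 1) / (of_nat i - 1))"] by blast
  then have cq: "\<And>i. i \<in> {2..p - 1 + s} \<Longrightarrow>
      ppow_dvd p cq ((\<Sum>k=1..n. r i k) * (of_nat p ^ (i - 1) / (of_nat i - 1)))" by blast
  have "ppow_dvd p E (volkenborn_sum p m (\<lambda>k. Rtilde p s n r (of_nat k + of_nat j / of_nat p) N)
      - Rtilde_integral p s n r j N)"
    if m: "m \<ge> nat (E - cr) + nat (E - cq + 1)" and N: "N \<ge> m + nat (E - cr)" for m N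
  proof -
    have "E - cr \<le> int N + 1 - int m" "E - cr \<le> int m + 2" "m \<le> N" using m N by linarith+
    from volkenborn_sum_Rtilde_approx[OF r1 cr cq this]
    have "ppow_dvd p (min (cr + (E - cr)) (cq + (int m - 1)))
      (volkenborn_sum p m (\<lambda>k. Rtilde p s n r (of_nat k + of_nat j / of_nat p) N) - Rtilde_integral p s n r j N)"
      .
    moreover have "E \<le> min (cr + (E - cr)) (cq + (int m - 1))" using m by linarith
    ultimately show ?thesis using ppow_dvd_mono[OF p] by blast
  qed
  then show "\<exists>M. \<forall>m\<ge>M. \<exists>M'. \<forall>N\<ge>M'. ppow_dvd p E
      (volkenborn_sum p m (\<lambda>k. Rtilde p s n r (of_nat k + of_nat j / of_nat p) N) - Rtilde_integral p s n r j N)"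
    by blast
qed


lemma neg_Rtilde_integral_eq:
  "- Rtilde_integral p s n r j N =
     - (\<Sum>i=1..p-1+s. \<Sum>k=1..n. \<Sum>\<nu><k. r i k / (of_nat \<nu> + of_nat j / of_nat p) ^ i)
     + (\<Sum>i=2..p-1+s. (\<Sum>k=1..n. r i k) * omega p (of_nat j / of_nat p) N powi (1 - int i)
          * (hurwitz_integral p j (i - 1) N / (of_nat i - 1)))"
proof -
  have "(\<Sum>i=2..p-1+s. (\<Sum>k=1..n. r i k) * omega p (of_nat j / of_nat p) N powi (1 - int i)
        * (hurwitz_integral p j (i - 1) N / (of_nat i - 1)))
      = (\<Sum>i=2..p-1+s. (\<Sum>k=1..n. r i k) * (of_nat p ^ (i - 1) / (of_nat i - 1))
          * volkenborn_sum p N (inv_qpow p j (i - 1)))"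
    by (intro sum.cong refl) (simp only: mult.assoc omega_frac_times_zeta[OF p j] atLeastAtMost_iff)
  then show ?thesis unfolding Rtilde_integral_def by simp
qed
end

theorem lemma4p3:
  fixes p s n j :: nat and r :: "nat \<Rightarrow> nat \<Rightarrow> rat"
  assumes "prime p" and "p \<ge> 5" and "s > 0"
    and "n > (p + s) ^ 4"
    and pfd: "\<And>t::rat. (\<forall>k\<in>{0..n}. t \<noteq> - of_nat k) \<Longrightarrow>
               Rn p s n t = (\<Sum>i=1..p-1+s. \<Sum>k=1..n. r i k / (t + of_nat k) ^ i)"
    and "j \<in> {1..p-1}"
  shows "\<exists>S Z.
     volkenborn p (\<lambda>k. Rtilde p s n r (of_nat k + of_nat j / of_nat p)) (\<lambda>N. - S N) \<and>
     (\<forall>i\<in>{2..p-1+s}. padic_hurwitz_zeta p i (of_nat j / of_nat p) (Z i)) \<and>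
     padic_eq p S (\<lambda>N.
        (- (\<Sum>i=1..p-1+s. \<Sum>k=1..n. \<Sum>\<nu><k. r i k / (of_nat \<nu> + of_nat j / of_nat p) ^ i))
        + (\<Sum>i=2..p-1+s. (\<Sum>k=1..n. r i k) *
             (omega p (of_nat j / of_nat p) N) powi (1 - int i) * Z i N))"
proof -
  have p: "prime p" and p3: "p \<ge> 3" using assms(1,2) by simp_all
  have j: "\<not> p dvd j" using assms(6) by (auto dest: dvd_imp_le)
  have r1: "(\<Sum>k=1..n. r 1 k) = 0"
    using residue_sum_eq_zero[OF _ Rn_degree_gap pfd] assms(2-4) by simp
  define Z where "Z = (\<lambda>i N. hurwitz_integral p j (i - 1) N / (of_nat i - 1))"
  define S where "S = (\<lambda>N.
        (- (\<Sum>i=1..p-1+s. \<Sum>k=1..n. \<Sum>\<nu><k. r i k / (of_nat \<nu> + of_nat j / of_nat p) ^ i))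
        + (\<Sum>i=2..p-1+s. (\<Sum>k=1..n. r i k) *
             (omega p (of_nat j / of_nat p) N) powi (1 - int i) * Z i N))"
  have S_eq: "S = (\<lambda>N. - Rtilde_integral p s n r j N)"
    unfolding S_def Z_def by (intro ext) (simp only: neg_Rtilde_integral_eq[OF p p3 j])
  have "volkenborn p (\<lambda>k. Rtilde p s n r (of_nat k + of_nat j / of_nat p)) (\<lambda>N. - S N)"
    unfolding S_eq using volkenborn_Rtilde[OF p p3 j, where r = r and n = n and s = s] r1 by simp
  moreover have "\<forall>i\<in>{2..p-1+s}. padic_hurwitz_zeta p i (of_nat j / of_nat p) (Z i)"
    unfolding Z_def using padic_hurwitz_zeta_frac[OF p j] by simp
  moreover have "padic_eq p S S"
    unfolding S_eq by (rule padic_eq_refl[OF p pcauchy_minus[OF p pcauchy_Rtilde_integral[OF p p3 j]]])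
  ultimately show ?thesis by (intro exI[of _ S] exI[of _ Z]) (simp only: S_def)
qed

end
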